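(* Let $n,n'\ge2$, $[n,a,b,r]\in\Lambda_n$ and $[n',a',b',r']\in\Lambda_{n'}$ be distinct indices. Then $G(n,a,b,r)$ and $G(n',a',b',r')$ are isomorphic only when the two indices are $[m,1,m,2]$ and $[2m,2,m,1]$ for some odd $m$. Conversely, for $m$ odd ($m\ge3$), an isomorphism $G(m,1,m,2)\to G(2m,2,m,1)$ is given on generators by $$\begin{pmatrix}1&0\\0&-1\end{pmatrix}\mapsto\begin{pmatrix}0&k\\-k&0\end{pmatrix},\qquad \begin{pmatrix}0&c\\c^{-1}&0\end{pmatrix}\mapsto\begin{pmatrix}0&c\\c^{-1}&0\end{pmatrix}\ \ (c\in\{1,\omega_m,j\}),$$ where $\omega_m=\cos(\pi/m)+i\sin(\pi/m)$.
   Context: $\mathbb{H}$ is the real quaternion algebra with basis $1,i,j,k$. For $n\ge2$ let $\omega_n:=\cos(\pi/n)+i\sin(\pi/n)\in\mathbb{H}$ and $\mathcal{D}_n:=\langle\omega_n,j\rangle$ (dicyclic group of order $4n$). $\Omega_n:=\{(a,b):1\le a\le b\le n,\ a\mid n,\ b\mid n,\ \gcd(a,b)=1\}$, and $\Lambda_n:=\{[n,a,b,\tfrac{n}{ab}]:(a,b)\in\Omega_n\}\cup\{[n,a,b,\tfrac{2n}{ab}]:(a,b)\in\Omega_n,\ ab\text{ odd}\}$. For an index $[n,a,b,r]\in\Lambda_n$, $G(n,a,b,r)$ is the subgroup of $U(\mathbb{H}^2)$ generated by $\mathrm{diag}(\omega_n^{2n/r},1)$ and the matrices $\begin{pmatrix}0&c\\c^{-1}&0\end{pmatrix}$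 for $c\in\{1,\omega_n^a,j,\omega_n^bj\}$ (equivalently, the canonical-form reflection group with nondiagonal reflections given by the closure of $\{1,\omega_n^a,j,\omega_n^bj\}$ under $(x,y)\mapsto xy^{-1}x$, and diagonal reflections $\mathrm{diag}(h,1),\mathrm{diag}(1,h)$, $h\in\langle\omega_n^{2n/r}\rangle\setminus\{1\}$). A reflection is a non-identity $g\in U(\mathbb{H}^2)$ with $\operatorname{rank}(g-I)=1$. Two such reflection groups are called isomorphic if there is a group isomorphism between them mapping the set of reflections of one onto the set of reflections of the other. *)

theory Defs
  imports Complex_Main
begin

datatype quat = Quat (qre: real) (qi: real) (qj: real) (qk: real)

instantiation quat :: "{zero, one, plus, minus, uminus, times, inverse, power}"
begin
definition "0 = Quat 0 0 0 0"
definition "1 = Quat 1 0 0 0"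
definition "p + q = Quat (qre p + qre q) (qi p + qi q) (qj p + qj q) (qk p + qk q)"
definition "p - q = Quat (qre p - qre q) (qi p - qi q) (qj p - qj q) (qk p - qk q)"
definition "- q = Quat (- qre q) (- qi q) (- qj q) (- qk q)"
definition "p * q = Quat
   (qre p * qre q - qi p * qi q - qj p * qj q - qk p * qk q)
   (qre p * qi q + qi p * qre q + qj p * qk q - qk p * qj q)
   (qre p * qj q - qi p * qk q + qj p * qre q + qk p * qi q)
   (qre p * qk q + qi p * qj q - qj p * qi q + qk p * qre q)"
definition "inverse q = (let s = qre q ^ 2 + qi q ^ 2 + qj q ^ 2 + qk q ^ 2 in
   Quat (qre q / s) (- qi q / s) (- qj q / s) (- qk q / s))"
definition "divide p q = p * inverse (q :: quat)"
instance ..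
end

definition qcnj :: "quat \<Rightarrow> quat" where
  "qcnj q = Quat (qre q) (- qi q) (- qj q) (- qk q)"

definition quat_i :: quat where "quat_i = Quat 0 1 0 0"
definition quat_j :: quat where "quat_j = Quat 0 0 1 0"
definition quat_k :: quat where "quat_k = Quat 0 0 0 1"

definition omega :: "nat \<Rightarrow> quat" where
  "omega n = Quat (cos (pi / real n)) (sin (pi / real n)) 0 0"

text \<open>M2 a b c d is the matrix with rows (a b) and (c d).\<close>
datatype m2 = M2 quat quat quat quat

fun mmul :: "m2 \<Rightarrow> m2 \<Rightarrow> m2" where
  "mmul (M2 a b c d) (M2 e f g h) =
     M2 (a * e + b * g) (a * f + b * h) (c * e + d * g) (c * f + d * h)"

fun msub :: "m2 \<Rightarrow> m2 \<Rightarrow> m2" where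
  "msub (M2 a b c d) (M2 e f g h) = M2 (a - e) (b - f) (c - g) (d - h)"

fun madj :: "m2 \<Rightarrow> m2" where
  "madj (M2 a b c d) = M2 (qcnj a) (qcnj c) (qcnj b) (qcnj d)"

definition mI :: m2 where "mI = M2 1 0 0 1"
definition mzero :: m2 where "mzero = M2 0 0 0 0"

text \<open>Rank of a 2x2 quaternion matrix: the maximal number of right-linearly
  independent columns (columns (a,c) and (b,d)).\<close>
fun cols_dependent :: "m2 \<Rightarrow> bool" where
  "cols_dependent (M2 a b c d) =
     (\<exists>x y. (x \<noteq> 0 \<or> y \<noteq> 0) \<and> a * x + b * y = 0 \<and> c * x + d * y = 0)"

definition mrank :: "m2 \<Rightarrow> nat" where
  "mrank A = (if A = mzero then 0 else if cols_dependent A then 1 else 2)"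

definition is_reflection :: "m2 \<Rightarrow> bool" where
  "is_reflection g \<longleftrightarrow> g \<noteq> mI \<and> mrank (msub g mI) = 1"

text \<open>Subgroup of U(H^2) generated by a set S of unitary matrices
  (inverses of unitary generators are their conjugate transposes).\<close>
inductive_set gen_grp :: "m2 set \<Rightarrow> m2 set" for S where
  gen_one: "mI \<in> gen_grp S"
| gen_mul: "g \<in> gen_grp S \<Longrightarrow> s \<in> S \<Longrightarrow> mmul s g \<in> gen_grp S"
| gen_inv: "g \<in> gen_grp S \<Longrightarrow> s \<in> S \<Longrightarrow> mmul (madj s) g \<in> gen_grp S"

definition Nmat :: "quat \<Rightarrow> m2" where
  "Nmat c = M2 0 c (inverse c) 0"

definition Omega_set :: "nat \<Rightarrow> (nat \<times> nat) set" where
  "Omega_set n = {(a, b). 1 \<le> a \<and> a \<le> b \<and> b \<le> n \<and> a dvd n \<and> b dvd n \<and> coprime a b}"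

definition Lambda_set :: "nat \<Rightarrow> (nat \<times> nat \<times> nat \<times> nat) set" where
  "Lambda_set n =
     {(n, a, b, n div (a * b)) | a b. (a, b) \<in> Omega_set n}
   \<union> {(n, a, b, (2 * n) div (a * b)) | a b. (a, b) \<in> Omega_set n \<and> odd (a * b)}"

definition Ggrp :: "nat \<Rightarrow> nat \<Rightarrow> nat \<Rightarrow> nat \<Rightarrow> m2 set" where
  "Ggrp n a b r = gen_grp
     ({M2 (omega n ^ ((2 * n) div r)) 0 0 1}
      \<union> Nmat ` {1, omega n ^ a, quat_j, omega n ^ b * quat_j})"

definition refl_iso :: "(m2 \<Rightarrow> m2) \<Rightarrow> m2 set \<Rightarrow> m2 set \<Rightarrow> bool" where
  "refl_iso f G H \<longleftrightarrow> bij_betw f G H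
     \<and> (\<forall>x\<in>G. \<forall>y\<in>G. f (mmul x y) = mmul (f x) (f y))
     \<and> f ` {g \<in> G. is_reflection g} = {h \<in> H. is_reflection h}"

definition refl_isomorphic :: "m2 set \<Rightarrow> m2 set \<Rightarrow> bool" where
  "refl_isomorphic G H \<longleftrightarrow> (\<exists>f. refl_iso f G H)"

end

theory Submission
  imports Defs
begin

(* All groups G(n,a,b,r) consist of monomial matrices with entries in the dicyclic group, and
   their reflections can be listed: there are 2(r-1) + P + Q of them, where P = 2n/a and
   Q = 2n/b. A reflection isomorphism preserves this number, the set of orders of reflections
   (they divide 2 or r, and r occurs once r \<ge> 2) and the set of orders of products of two
   reflections (they divide 2r, P, Q or 4, and P and Q occur). An elementary case analysis
   shows that these invariants determine the index, except for the pairs [m,1,m,2] and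
   [2m,2,m,1] with m odd.

   For such a pair both groups have the form H \<union> H t with H = \<langle>N(1), N(\<omega>\<^sub>m), N(j)\<rangle> and an
   involution t, namely t = diag(1,-1) and t = N(k). The product diag(1,-1) N(k) = antidiag(k,k)
   centralises H, so both involutions act alike on H and h \<mapsto> h, h diag(1,-1) \<mapsto> h N(k) is an
   isomorphism; it maps the reflections \<plusminus>diag(1,-1) outside H to the reflections \<plusminus>N(k). *)

lemma quat_eqI: "qre p = qre q \<Longrightarrow> qi p = qi q \<Longrightarrow> qj p = qj q \<Longrightarrow> qk p = qk q \<Longrightarrow> p = q"
  by (cases p; cases q) auto

lemma quat_component_simps [simp]:
  "qre 0 = 0" "qi 0 = 0" "qj 0 = 0" "qk 0 = 0"
  "qre 1 = 1" "qi 1 = 0" "qj 1 = 0" "qk 1 = 0"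
  "qre (p + q) = qre p + qre q" "qi (p + q) = qi p + qi q"
  "qj (p + q) = qj p + qj q" "qk (p + q) = qk p + qk q"
  "qre (p - q) = qre p - qre q" "qi (p - q) = qi p - qi q"
  "qj (p - q) = qj p - qj q" "qk (p - q) = qk p - qk q"
  "qre (- q) = - qre q" "qi (- q) = - qi q" "qj (- q) = - qj q" "qk (- q) = - qk q"
  "qre (p * q) = qre p * qre q - qi p * qi q - qj p * qj q - qk p * qk q"
  "qi (p * q) = qre p * qi q + qi p * qre q + qj p * qk q - qk p * qj q"
  "qj (p * q) = qre p * qj q - qi p * qk q + qj p * qre q + qk p * qi q"
  "qk (p * q) = qre p * qk q + qi p * qj q - qj p * qi q + qk p * qre q"
  by (simp_all add: zero_quat_def one_quat_def plus_quat_def minus_quat_def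
      uminus_quat_def times_quat_def)

definition qnorm2 :: "quat \<Rightarrow> real" where
  "qnorm2 q = qre q ^ 2 + qi q ^ 2 + qj q ^ 2 + qk q ^ 2"

lemma qnorm2_eq_0_iff: "qnorm2 q = 0 \<longleftrightarrow> q = 0"
proof
  assume "qnorm2 q = 0"
  then have "qre q = 0" "qi q = 0" "qj q = 0" "qk q = 0"
    unfolding qnorm2_def by (smt (verit) zero_le_power2 zero_eq_power2)+
  then show "q = 0" by (auto intro: quat_eqI)
qed (simp add: qnorm2_def)

lemma quat_inverse_components [simp]:
  "qre (inverse q) = qre q / qnorm2 q" "qi (inverse q) = - qi q / qnorm2 q"
  "qj (inverse q) = - qj q / qnorm2 q" "qk (inverse q) = - qk q / qnorm2 q"
  by (simp_all add: inverse_quat_def qnorm2_def Let_def)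

instance quat :: division_ring
proof
  fix a b c :: quat
  show "a * b * c = a * (b * c)" by (rule quat_eqI) (simp_all add: algebra_simps)
  show "1 * a = a" "a * 1 = a" by (rule quat_eqI; simp)+
  show "a + b + c = a + (b + c)" "a + b = b + a" "0 + a = a" "- a + a = 0" "a - b = a + - b"
    by (rule quat_eqI; simp)+
  show "(a + b) * c = a * c + b * c" "a * (b + c) = a * b + a * c"
    by (rule quat_eqI; simp add: algebra_simps)+
  show "(0::quat) \<noteq> 1" by (metis quat_component_simps(1,5) zero_neq_one)
  show "a / b = a * inverse b" by (simp add: divide_quat_def)
  show "inverse (0::quat) = 0" by (rule quat_eqI) (simp_all add: qnorm2_def)
  assume "a \<noteq> 0"
  then have nz: "qnorm2 a \<noteq> 0" by (simp add: qnorm2_eq_0_iff)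
  have sq: "qnorm2 a = qre a * qre a + qi a * qi a + qj a * qj a + qk a * qk a"
    by (simp add: qnorm2_def power2_eq_square)
  show "inverse a * a = 1"
    by (rule quat_eqI) (use nz in \<open>simp_all add: field_simps, simp_all add: sq algebra_simps\<close>)
  show "a * inverse a = 1"
    by (rule quat_eqI) (use nz in \<open>simp_all add: field_simps, simp_all add: sq algebra_simps\<close>)
qed

section \<open>The dicyclic group \<open>\<langle>\<omega>\<^sub>n, j\<rangle>\<close> in exponent coordinates\<close>

definition dic_angle :: "nat \<Rightarrow> int \<Rightarrow> real" where
  "dic_angle n k = of_int k * pi / of_nat n"

text \<open>\<open>dic n False k = \<omega>\<^sub>n\<^sup>k\<close> and \<open>dic n True k = \<omega>\<^sub>n\<^sup>k j\<close>.\<close>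

definition dic :: "nat \<Rightarrow> bool \<Rightarrow> int \<Rightarrow> quat" where
  "dic n e k = (if e then Quat 0 0 (cos (dic_angle n k)) (sin (dic_angle n k))
                else Quat (cos (dic_angle n k)) (sin (dic_angle n k)) 0 0)"

text \<open>Since \<open>j \<omega> = \<omega>\<^sup>-\<^sup>1 j\<close> and \<open>j\<^sup>2 = \<omega>\<^sup>n = -1\<close>, the exponents multiply as follows.\<close>

definition dic_mult_exp :: "nat \<Rightarrow> bool \<Rightarrow> bool \<Rightarrow> int \<Rightarrow> int \<Rightarrow> int" where
  "dic_mult_exp n e e' k l = (if e then if e' then k - l + int n else k - l else k + l)"

definition dic_inv_exp :: "nat \<Rightarrow> bool \<Rightarrow> int \<Rightarrow> int" where
  "dic_inv_exp n e k = (if e then k + int n else - k)"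

lemma dic_components [simp]:
  "qre (dic n e k) = (if e then 0 else cos (dic_angle n k))"
  "qi (dic n e k) = (if e then 0 else sin (dic_angle n k))"
  "qj (dic n e k) = (if e then cos (dic_angle n k) else 0)"
  "qk (dic n e k) = (if e then sin (dic_angle n k) else 0)"
  by (simp_all add: dic_def)

lemma dic_angle_add: "dic_angle n (k + l) = dic_angle n k + dic_angle n l"
  by (simp add: dic_angle_def add_divide_distrib distrib_right)

lemma dic_angle_diff: "dic_angle n (k - l) = dic_angle n k - dic_angle n l"
  by (simp add: dic_angle_def diff_divide_distrib left_diff_distrib)

lemma dic_angle_minus: "dic_angle n (- k) = - dic_angle n k"
  by (simp add: dic_angle_def)

lemma dic_angle_n: "n > 0 \<Longrightarrow> dic_angle n (int n) = pi"
  by (simp add: dic_angle_def)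

lemma dic_mult:
  assumes "n > 0"
  shows "dic n e k * dic n e' l = dic n (e \<noteq> e') (dic_mult_exp n e e' k l)"
  by (cases e; cases e'; rule quat_eqI)
     (simp_all add: assms dic_mult_exp_def dic_angle_add dic_angle_diff dic_angle_n
       cos_add sin_add cos_diff sin_diff algebra_simps)

lemma dic_zero_exp: "dic n False 0 = 1" "dic n True 0 = quat_j"
  by (rule quat_eqI; simp add: dic_angle_def quat_j_def)+

lemma cos_sin_dic_angle_eq_iff:
  assumes "n > 0"
  shows "cos (dic_angle n k) = cos (dic_angle n l) \<and> sin (dic_angle n k) = sin (dic_angle n l)
    \<longleftrightarrow> 2 * int n dvd k - l"
proof -
  have "cos (dic_angle n k) = cos (dic_angle n l) \<and> sin (dic_angle n k) = sin (dic_angle n l)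
      \<longleftrightarrow> (\<exists>c::int. dic_angle n k = dic_angle n l + 2 * pi * of_int c)"
    using sin_cos_eq_iff by blast
  also have "\<dots> \<longleftrightarrow> (\<exists>c::int. k = l + 2 * int n * c)"
  proof (rule ex_cong1)
    fix c :: int
    have "dic_angle n k = dic_angle n l + 2 * pi * of_int c
        \<longleftrightarrow> of_int k * pi = of_int (l + 2 * int n * c) * pi"
      using assms by (simp add: dic_angle_def field_simps)
    also have "\<dots> \<longleftrightarrow> k = l + 2 * int n * c"
      by (simp only: mult_cancel_right pi_neq_zero of_int_eq_iff simp_thms)
    finally show "dic_angle n k = dic_angle n l + 2 * pi * of_int c \<longleftrightarrow> k = l + 2 * int n * c" .
  qed
  also have "\<dots> \<longleftrightarrow> 2 * int n dvd k - l"
    by (auto simp: dvd_def algebra_simps)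
  finally show ?thesis .
qed

lemma dic_eq_iff:
  assumes "n > 0"
  shows "dic n e k = dic n e' l \<longleftrightarrow> e = e' \<and> 2 * int n dvd k - l"
proof -
  have "cos x \<noteq> 0 \<or> sin x \<noteq> 0" for x :: real
    by (metis sin_cos_squared_add power_zero_numeral add_0 zero_neq_one)
  then have "e = e'" if "dic n e k = dic n e' l"
    using that by (cases e; cases e') (auto simp: dic_def)
  then show ?thesis
    using cos_sin_dic_angle_eq_iff[OF assms, of k l] by (cases e) (auto simp: dic_def)
qed

lemma dic_neq_0: "dic n e k \<noteq> 0"
proof
  assume "dic n e k = 0"
  then have "cos (dic_angle n k) = 0" "sin (dic_angle n k) = 0"
    by (metis dic_components quat_component_simps(1-4))+
  then show False using sin_cos_squared_add[of "dic_angle n k"] by simp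
qed

lemma dic_eq_1_iff: "n > 0 \<Longrightarrow> dic n e k = 1 \<longleftrightarrow> \<not> e \<and> 2 * int n dvd k"
  using dic_eq_iff[of n e k False 0] by (simp add: dic_zero_exp)

lemma dic_inverse: "n > 0 \<Longrightarrow> inverse (dic n e k) = dic n e (dic_inv_exp n e k)"
  by (rule inverse_unique) (simp add: dic_mult dic_eq_1_iff dic_mult_exp_def dic_inv_exp_def)

lemma qcnj_dic: "n > 0 \<Longrightarrow> qcnj (dic n e k) = dic n e (dic_inv_exp n e k)"
  by (cases e; rule quat_eqI)
     (simp_all add: qcnj_def dic_inv_exp_def dic_angle_add dic_angle_minus dic_angle_n)

lemma dic_mult_rotation: "dic n False k * dic n e l = dic n e (k + l)"
  by (cases e; rule quat_eqI) (simp_all add: dic_angle_add cos_add sin_add algebra_simps)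

lemma omega_power: "omega n ^ k = dic n False (int k)"
proof (induction k)
  case (Suc k)
  have "omega n = dic n False 1"
    by (rule quat_eqI) (simp_all add: omega_def dic_angle_def)
  with Suc show ?case by (simp add: dic_mult_rotation add.commute)
qed (simp add: dic_zero_exp)

lemma dic_add_n:
  assumes "n > 0"
  shows "dic n e (k + int n) = - dic n e k"
  by (cases e; rule quat_eqI) (simp_all add: dic_angle_add dic_angle_n assms)

lemma dic_double: "m > 0 \<Longrightarrow> dic (2 * m) e (2 * k) = dic m e k"
  by (simp add: dic_def dic_angle_def)

lemma dic_quat_k: "m > 0 \<Longrightarrow> dic (2 * m) True (int m) = quat_k"
  by (rule quat_eqI) (simp_all add: dic_angle_def quat_k_def)

lemma mmul_assoc: "mmul (mmul x y) z = mmul x (mmul y z)"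
  by (cases x; cases y; cases z) (simp add: algebra_simps)

lemma mmul_mI [simp]: "mmul mI g = g" "mmul g mI = g"
  by (cases g; simp add: mI_def)+

lemma gen_grp_mult: "g \<in> gen_grp S \<Longrightarrow> h \<in> gen_grp S \<Longrightarrow> mmul g h \<in> gen_grp S"
  by (induction g rule: gen_grp.induct) (simp_all add: mmul_assoc gen_grp.intros)

lemma gen_grp_generator: "s \<in> S \<Longrightarrow> s \<in> gen_grp S"
  using gen_grp.gen_mul[OF gen_grp.gen_one, of s S] by simp

lemma gen_grp_subset:
  assumes "S \<subseteq> gen_grp T" "\<And>s. s \<in> S \<Longrightarrow> madj s \<in> gen_grp T"
  shows "gen_grp S \<subseteq> gen_grp T"
proof
  fix g assume "g \<in> gen_grp S"
  then show "g \<in> gen_grp T"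
    by (induction g rule: gen_grp.induct) (use assms gen_grp_mult in \<open>auto intro: gen_grp.gen_one\<close>)
qed

lemma gen_grp_commute:
  assumes "g \<in> gen_grp S" "\<And>s. s \<in> S \<Longrightarrow> madj s = s"
    and "\<And>s. s \<in> S \<Longrightarrow> mmul z s = mmul s z"
  shows "mmul z g = mmul g z"
proof -
  have "mmul z (mmul s g) = mmul (mmul s g) z" if "s \<in> S" "mmul z g = mmul g z" for s g
  proof -
    have "mmul z (mmul s g) = mmul (mmul s z) g"
      using assms(3)[OF \<open>s \<in> S\<close>] by (simp flip: mmul_assoc)
    also have "\<dots> = mmul (mmul s g) z"
      using \<open>mmul z g = mmul g z\<close> by (simp add: mmul_assoc)
    finally show ?thesis .
  qed
  with assms(1) show ?thesis
    by (induction g rule: gen_grp.induct) (simp_all add: assms(2))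
qed

lemma gen_grp_conj_closed:
  assumes "g \<in> gen_grp S" "\<And>s. s \<in> S \<Longrightarrow> madj s = s"
    and "mmul t t = mI" "\<And>s. s \<in> S \<Longrightarrow> mmul t (mmul s t) \<in> gen_grp S"
  shows "mmul t (mmul g t) \<in> gen_grp S"
proof -
  have conj_mult: "mmul t (mmul (mmul s g) t) = mmul (mmul t (mmul s t)) (mmul t (mmul g t))" for s g
  proof -
    have "mmul (mmul t (mmul s t)) (mmul t (mmul g t)) = mmul t (mmul s (mmul (mmul t t) (mmul g t)))"
      by (simp only: mmul_assoc)
    then show ?thesis by (simp add: assms(3) mmul_assoc)
  qed
  from assms(1) show ?thesis
    by (induction g rule: gen_grp.induct)
       (simp_all add: assms gen_grp.gen_one conj_mult gen_grp_mult)
qed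

primrec mpow :: "m2 \<Rightarrow> nat \<Rightarrow> m2" where
  "mpow g 0 = mI"
| "mpow g (Suc k) = mmul g (mpow g k)"

lemma mpow_add: "mpow g (i + j) = mmul (mpow g i) (mpow g j)"
  by (induction i) (simp_all add: mmul_assoc)

lemma mpow_mult: "mpow g (i * j) = mpow (mpow g i) j"
  by (induction j) (simp_all add: mpow_add mult.commute[of i] add.commute)

lemma mpow_mI [simp]: "mpow mI k = mI"
  by (induction k) simp_all

lemma mpow_2: "mpow g 2 = mmul g g"
  by (simp add: numeral_2_eq_2)

lemma mpow_double: "mpow x (2 * j) = mpow (mmul x x) j"
  by (simp add: mpow_mult mpow_2)

lemma mpow_gen_grp: "g \<in> gen_grp S \<Longrightarrow> mpow g k \<in> gen_grp S"
  by (induction k) (simp_all add: gen_grp.gen_one gen_grp_mult)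

definition has_order :: "m2 \<Rightarrow> nat \<Rightarrow> bool" where
  "has_order x k \<longleftrightarrow> 0 < k \<and> mpow x k = mI \<and> (\<forall>j. 0 < j \<and> j < k \<longrightarrow> mpow x j \<noteq> mI)"

lemma has_order_dvd:
  assumes "has_order g k" "mpow g u = mI"
  shows "k dvd u"
proof -
  have k: "0 < k" "mpow g k = mI" "\<And>j. 0 < j \<Longrightarrow> j < k \<Longrightarrow> mpow g j \<noteq> mI"
    using assms(1) by (auto simp: has_order_def)
  have "mpow g u = mmul (mpow (mpow g k) (u div k)) (mpow g (u mod k))"
    by (metis div_mult_mod_eq mpow_add mpow_mult mult.commute)
  then have "mpow g (u mod k) = mI"
    using assms(2) k(2) by (simp add: mpow_mI)
  then show ?thesis
    using k(1) k(3)[of "u mod k"] by (auto simp: dvd_eq_mod_eq_0)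
qed

section \<open>Monomial matrices with dicyclic entries\<close>

text \<open>\<open>mon n s e k1 k2\<close> has the entries \<open>dic n e k1\<close> in row 1 and \<open>dic n e k2\<close> in row 2; it is
  anti-diagonal if \<open>s\<close> and diagonal otherwise. In the groups below both entries of a monomial
  matrix always lie in the same coset of \<open>\<langle>\<omega>\<^sub>n\<rangle>\<close>, whence the single flag \<open>e\<close>.\<close>

definition mon :: "nat \<Rightarrow> bool \<Rightarrow> bool \<Rightarrow> int \<Rightarrow> int \<Rightarrow> m2" where
  "mon n s e k1 k2 = (if s then M2 0 (dic n e k1) (dic n e k2) 0
                      else M2 (dic n e k1) 0 0 (dic n e k2))"

lemma mmul_mon:
  assumes "n > 0"
  shows "mmul (mon n s e k1 k2) (mon n s' e' l1 l2) =
    mon n (s \<noteq> s') (e \<noteq> e') (dic_mult_exp n e e' k1 (if s then l2 else l1))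
      (dic_mult_exp n e e' k2 (if s then l1 else l2))"
  by (cases s; cases s') (simp_all add: mon_def dic_mult assms)

lemma mon_eq_iff:
  assumes "n > 0"
  shows "mon n s e k1 k2 = mon n s' e' l1 l2 \<longleftrightarrow>
    s = s' \<and> e = e' \<and> 2 * int n dvd k1 - l1 \<and> 2 * int n dvd k2 - l2"
  by (cases s; cases s') (auto simp: mon_def dic_eq_iff assms dic_neq_0 dic_neq_0[symmetric])

lemma mI_eq_mon: "mI = mon n False False 0 0"
  by (simp add: mI_def mon_def dic_zero_exp)

lemma mon_eq_mI_iff:
  "n > 0 \<Longrightarrow> mon n s e k1 k2 = mI \<longleftrightarrow> \<not> s \<and> \<not> e \<and> 2 * int n dvd k1 \<and> 2 * int n dvd k2"
  by (simp add: mI_eq_mon[of n] mon_eq_iff)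

lemma qcnj_0 [simp]: "qcnj 0 = 0"
  by (rule quat_eqI) (simp_all add: qcnj_def)

lemma madj_mon:
  assumes "n > 0"
  shows "madj (mon n s e k1 k2) =
    mon n s e (dic_inv_exp n e (if s then k2 else k1)) (dic_inv_exp n e (if s then k1 else k2))"
  by (cases s) (simp_all add: mon_def qcnj_dic assms)

lemma Nmat_dic: "n > 0 \<Longrightarrow> Nmat (dic n e k) = mon n True e k (dic_inv_exp n e k)"
  by (simp add: Nmat_def mon_def dic_inverse)

lemma mpow_mon_diagonal:
  "mpow (mon n False False k1 k2) j = mon n False False (int j * k1) (int j * k2)"
  by (induction j) (simp_all add: mI_eq_mon[of n] mon_def dic_mult_rotation algebra_simps)

lemma mpow_mon_diagonal_eq_mI_iff:
  "n > 0 \<Longrightarrow> mpow (mon n False False k1 k2) j = mI \<longleftrightarrow>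
    2 * int n dvd int j * k1 \<and> 2 * int n dvd int j * k2"
  by (simp add: mpow_mon_diagonal mon_eq_mI_iff)

lemma has_order_mon_diagonal:
  assumes "n > 0" "c > 0" "int c * int p = 2 * int n" "k1 = int c \<or> k1 = - int c"
    and "2 * int n dvd int p * k2"
  shows "has_order (mon n False False k1 k2) p"
proof -
  have "2 * int n dvd int j * k1 \<longleftrightarrow> p dvd j" for j
  proof -
    have "2 * int n dvd int j * k1 \<longleftrightarrow> int c * int p dvd int c * int j"
      using assms(3,4) by (auto simp: mult.commute)
    also have "\<dots> \<longleftrightarrow> p dvd j" using assms(2) by simp
    finally show ?thesis .
  qed
  moreover have "0 < p" using assms(1,3) by (cases p) auto
  ultimately show ?thesis
    using assms(1,5) by (auto simp: has_order_def mpow_mon_diagonal_eq_mI_iff dest: dvd_imp_le)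
qed

lemma mmul_mon_self:
  assumes "n > 0"
  shows "mmul (mon n s e k1 k2) (mon n s e k1 k2) =
    (if s then if e then mon n False False (k1 - k2 + int n) (k2 - k1 + int n)
               else mon n False False (k1 + k2) (k1 + k2)
     else if e then mon n False False (int n) (int n) else mon n False False (2 * k1) (2 * k2))"
  by (simp add: mmul_mon assms dic_mult_exp_def mon_eq_iff)

lemma is_reflection_diagonal:
  "is_reflection (M2 x 0 0 y) \<longleftrightarrow> (x = 1) \<noteq> (y = 1)"
proof -
  have "cols_dependent (M2 (x - 1) 0 0 (y - 1)) \<longleftrightarrow> x = 1 \<or> y = 1"
  proof
    assume "cols_dependent (M2 (x - 1) 0 0 (y - 1))"
    then obtain u v where "u \<noteq> 0 \<or> v \<noteq> 0" "(x - 1) * u = 0" "(y - 1) * v = 0"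
      by auto
    then show "x = 1 \<or> y = 1" by auto
  next
    assume "x = 1 \<or> y = 1"
    then show "cols_dependent (M2 (x - 1) 0 0 (y - 1))"
    proof
      assume "x = 1"
      show ?thesis unfolding cols_dependent.simps
        by (rule exI[of _ 1], rule exI[of _ 0]) (simp add: \<open>x = 1\<close>)
    next
      assume "y = 1"
      show ?thesis unfolding cols_dependent.simps
        by (rule exI[of _ 0], rule exI[of _ 1]) (simp add: \<open>y = 1\<close>)
    qed
  qed
  then show ?thesis
    by (auto simp: is_reflection_def mrank_def mI_def mzero_def)
qed

lemma is_reflection_antidiagonal: "is_reflection (M2 0 x y 0) \<longleftrightarrow> y * x = 1"
proof -
  have "cols_dependent (M2 (- 1) x y (- 1)) \<longleftrightarrow> y * x = 1"
  proof
    assume "cols_dependent (M2 (- 1) x y (- 1))"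
    then obtain u v where uv: "u \<noteq> 0 \<or> v \<noteq> 0" "- 1 * u + x * v = 0" "y * u + - 1 * v = 0"
      by auto
    then have "u = x * v" "v = y * x * v" by (simp_all add: algebra_simps)
    with uv have "(1 - y * x) * v = 0" "v \<noteq> 0" by (auto simp: algebra_simps)
    then show "y * x = 1" by simp
  next
    assume "y * x = 1"
    show "cols_dependent (M2 (- 1) x y (- 1))"
      unfolding cols_dependent.simps by (rule exI[of _ x], rule exI[of _ 1]) (simp add: \<open>y * x = 1\<close>)
  qed
  then show ?thesis
    by (simp add: is_reflection_def mrank_def mI_def mzero_def)
qed

lemma is_reflection_mon:
  assumes "n > 0"
  shows "is_reflection (mon n s e k1 k2) \<longleftrightarrow>
    (if s then 2 * int n dvd (if e then k2 - k1 + int n else k1 + k2)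
     else \<not> e \<and> (2 * int n dvd k1) \<noteq> (2 * int n dvd k2))"
  by (cases s)
     (auto simp: mon_def is_reflection_diagonal is_reflection_antidiagonal dic_mult assms
        dic_eq_1_iff dic_mult_exp_def add.commute)

section \<open>Congruence subgroups of monomial matrices\<close>

definition sum_exp :: "nat \<Rightarrow> bool \<Rightarrow> int \<Rightarrow> int \<Rightarrow> int" where
  "sum_exp n e k1 k2 = k1 + k2 - (if e then int n else 0)"

definition diff_exp :: "nat \<Rightarrow> bool \<Rightarrow> int \<Rightarrow> int \<Rightarrow> int" where
  "diff_exp n e k1 k2 = k1 - k2 - (if e then int n else 0)"

lemma sum_exp_mult:
  "sum_exp n (e \<noteq> e') (dic_mult_exp n e e' k1 l1) (dic_mult_exp n e e' k2 l2) =
    sum_exp n e k1 k2 + (if e then - sum_exp n e' l1 l2 else sum_exp n e' l1 l2)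
    + (if e \<and> e' then 2 * int n else 0)"
  by (simp add: sum_exp_def dic_mult_exp_def)

lemma diff_exp_mult:
  "diff_exp n (e \<noteq> e') (dic_mult_exp n e e' k1 l1) (dic_mult_exp n e e' k2 l2) =
    diff_exp n e k1 k2 + (if e then - diff_exp n e' l1 l2 else diff_exp n e' l1 l2)"
  by (simp add: diff_exp_def dic_mult_exp_def)

lemma sum_exp_inv:
  "sum_exp n e (dic_inv_exp n e k1) (dic_inv_exp n e k2) =
    (if e then sum_exp n e k1 k2 + 2 * int n else - sum_exp n e k1 k2)"
  by (simp add: sum_exp_def dic_inv_exp_def)

lemma diff_exp_inv:
  "diff_exp n e (dic_inv_exp n e k1) (dic_inv_exp n e k2) =
    (if e then diff_exp n e k1 k2 else - diff_exp n e k1 k2)"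
  by (simp add: diff_exp_def dic_inv_exp_def)

lemma madj_mon_mult_self:
  assumes "n > 0"
  shows "mmul (madj (mon n s e k1 k2)) (mon n s e k1 k2) = mI"
  by (simp add: assms madj_mon mmul_mon mon_eq_mI_iff dic_mult_exp_def dic_inv_exp_def)

locale mon_congruence =
  fixes n :: nat and u v w :: int
  assumes n_pos: "n > 0" and u_dvd: "u dvd 2 * int n" and v_dvd: "v dvd 2 * int n"
    and w_dvd: "w dvd int n"
begin

definition cond :: "bool \<Rightarrow> int \<Rightarrow> int \<Rightarrow> bool" where
  "cond e k1 k2 \<longleftrightarrow> u dvd sum_exp n e k1 k2 \<and> v dvd diff_exp n e k1 k2 \<and> w dvd k1 \<and> w dvd k2"

definition group :: "m2 set" where
  "group = {mon n s e k1 k2 |s e k1 k2. cond e k1 k2}"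

lemma cond_swap:
  assumes "cond e k1 k2"
  shows "cond e k2 k1"
proof -
  have "diff_exp n e k2 k1 = - diff_exp n e k1 k2 - (if e then 2 * int n else 0)"
    "sum_exp n e k2 k1 = sum_exp n e k1 k2"
    by (simp_all add: diff_exp_def sum_exp_def)
  with assms v_dvd show ?thesis by (simp add: cond_def)
qed

lemma cond_mult:
  assumes "cond e k1 k2" "cond e' l1 l2"
  shows "cond (e \<noteq> e') (dic_mult_exp n e e' k1 l1) (dic_mult_exp n e e' k2 l2)"
proof -
  have "w dvd dic_mult_exp n e e' k l" if "w dvd k" "w dvd l" for k l
    using that w_dvd by (simp add: dic_mult_exp_def)
  with assms u_dvd show ?thesis
    unfolding cond_def sum_exp_mult diff_exp_mult by auto
qed

lemma cond_inv:
  assumes "cond e k1 k2"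
  shows "cond e (dic_inv_exp n e k1) (dic_inv_exp n e k2)"
proof -
  from assms have "u dvd sum_exp n e k1 k2" "v dvd diff_exp n e k1 k2" "w dvd k1" "w dvd k2"
    by (simp_all add: cond_def)
  with u_dvd w_dvd show ?thesis
    unfolding cond_def sum_exp_inv diff_exp_inv by (cases e) (simp_all add: dic_inv_exp_def)
qed

lemma cond_cong:
  assumes "cond e k1 k2" "2 * int n dvd k1 - l1" "2 * int n dvd k2 - l2"
  shows "cond e l1 l2"
proof -
  have shift: "x dvd (k1 - l1) + (k2 - l2)" "x dvd (k1 - l1) - (k2 - l2)"
    "x dvd k1 - l1" "x dvd k2 - l2" if "x dvd 2 * int n" for x
  proof -
    show "x dvd k1 - l1" "x dvd k2 - l2"
      using dvd_trans[OF that assms(2)] dvd_trans[OF that assms(3)] .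
    then show "x dvd (k1 - l1) + (k2 - l2)" "x dvd (k1 - l1) - (k2 - l2)"
      by simp_all
  qed
  have "u dvd sum_exp n e k1 k2 - ((k1 - l1) + (k2 - l2))"
    using assms(1) shift(1)[OF u_dvd] by (simp add: cond_def)
  moreover have "v dvd diff_exp n e k1 k2 - ((k1 - l1) - (k2 - l2))"
    using assms(1) shift(2)[OF v_dvd] by (simp add: cond_def)
  moreover have "w dvd k1 - (k1 - l1)" "w dvd k2 - (k2 - l2)"
    using assms(1) shift(3,4)[OF dvd_mult[OF w_dvd]] by (simp_all only: cond_def dvd_diff)
  ultimately show ?thesis
    by (simp add: cond_def sum_exp_def diff_exp_def algebra_simps)
qed

lemma mon_in_group_iff: "mon n s e k1 k2 \<in> group \<longleftrightarrow> cond e k1 k2"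
proof
  assume "mon n s e k1 k2 \<in> group"
  then obtain s' e' l1 l2 where "mon n s e k1 k2 = mon n s' e' l1 l2" "cond e' l1 l2"
    by (auto simp: group_def)
  then show "cond e k1 k2"
    by (auto simp: mon_eq_iff n_pos intro: cond_cong dvd_diff_commute[THEN iffD1])
qed (auto simp: group_def)

lemma group_mult:
  assumes "g \<in> group" "h \<in> group"
  shows "mmul g h \<in> group"
proof -
  obtain s e k1 k2 s' e' l1 l2 where gh: "g = mon n s e k1 k2" "cond e k1 k2"
    "h = mon n s' e' l1 l2" "cond e' l1 l2"
    using assms by (auto simp: group_def)
  then have "cond e' (if s then l2 else l1) (if s then l1 else l2)"
    by (simp add: cond_swap)
  from cond_mult[OF gh(2) this] show ?thesis
    by (simp add: gh mmul_mon n_pos mon_in_group_iff)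
qed

lemma group_madj:
  assumes "g \<in> group"
  shows "madj g \<in> group"
proof -
  obtain s e k1 k2 where g: "g = mon n s e k1 k2" "cond e k1 k2"
    using assms by (auto simp: group_def)
  then have "cond e (if s then k2 else k1) (if s then k1 else k2)"
    by (simp add: cond_swap)
  from cond_inv[OF this] show ?thesis
    by (simp add: g madj_mon n_pos mon_in_group_iff)
qed

lemma mI_in_group: "mI \<in> group"
  by (simp add: mI_eq_mon[of n] mon_in_group_iff cond_def sum_exp_def diff_exp_def)

lemma gen_grp_subset_group:
  assumes "S \<subseteq> group"
  shows "gen_grp S \<subseteq> group"
proof
  fix g assume "g \<in> gen_grp S"
  then show "g \<in> group"
    by (induction g rule: gen_grp.induct) (use assms in \<open>auto intro: mI_in_group group_mult group_madj\<close>)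
qed

lemma group_cancel_left:
  assumes "h \<in> group" "mmul h x \<in> group"
  shows "x \<in> group"
proof -
  obtain s e k1 k2 where "h = mon n s e k1 k2" using assms(1) by (auto simp: group_def)
  then have "x = mmul (madj h) (mmul h x)"
    by (simp add: madj_mon_mult_self n_pos flip: mmul_assoc)
  then show ?thesis using assms group_mult group_madj by metis
qed

end

section \<open>Invariants of reflection isomorphisms\<close>

definition reflections :: "m2 set \<Rightarrow> m2 set" where
  "reflections G = {g \<in> G. is_reflection g}"

definition refl_orders :: "m2 set \<Rightarrow> nat set" where
  "refl_orders G = {k. \<exists>s\<in>reflections G. has_order s k}"

definition refl_prod_orders :: "m2 set \<Rightarrow> nat set" where
  "refl_prod_orders G = {k. \<exists>x\<in>reflections G. \<exists>y\<in>reflections G. has_order (mmul x y) k}"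

lemma refl_iso_reflections: "refl_iso f G H \<Longrightarrow> f ` reflections G = reflections H"
  by (simp add: refl_iso_def reflections_def)

lemma refl_iso_mI:
  assumes "refl_iso f (gen_grp S) (gen_grp T)"
  shows "f mI = mI"
proof -
  have bij: "bij_betw f (gen_grp S) (gen_grp T)"
    and hom: "\<forall>x\<in>gen_grp S. \<forall>y\<in>gen_grp S. f (mmul x y) = mmul (f x) (f y)"
    using assms by (auto simp: refl_iso_def)
  obtain g where g: "g \<in> gen_grp S" "f g = mI"
    using bij gen_grp.gen_one by (metis bij_betw_iff_bijections)
  have "f g = mmul (f mI) (f g)"
    using hom g(1) gen_grp.gen_one by (metis mmul_mI(1))
  with g(2) show ?thesis by simp
qed

lemma refl_iso_mpow:
  assumes "refl_iso f (gen_grp S) (gen_grp T)" "x \<in> gen_grp S"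
  shows "f (mpow x k) = mpow (f x) k"
proof (induction k)
  case 0
  show ?case using refl_iso_mI[OF assms(1)] by simp
next
  case (Suc k)
  then show ?case
    using assms mpow_gen_grp[OF assms(2)] by (simp add: refl_iso_def)
qed

lemma refl_iso_has_order:
  assumes "refl_iso f (gen_grp S) (gen_grp T)" "x \<in> gen_grp S"
  shows "has_order (f x) k \<longleftrightarrow> has_order x k"
proof -
  have "inj_on f (gen_grp S)" using assms(1) by (simp add: refl_iso_def bij_betw_def)
  then have "mpow (f x) j = mI \<longleftrightarrow> mpow x j = mI" for j
    using refl_iso_mpow[OF assms] refl_iso_mI[OF assms(1)] mpow_gen_grp[OF assms(2)]
      gen_grp.gen_one by (metis inj_on_eq_iff)
  then show ?thesis by (simp add: has_order_def)
qed

lemma refl_iso_card_reflections: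
  assumes "refl_iso f G H"
  shows "card (reflections G) = card (reflections H)"
proof -
  have "inj_on f (reflections G)"
    using assms by (auto simp: refl_iso_def bij_betw_def reflections_def intro: inj_on_subset)
  then show ?thesis using refl_iso_reflections[OF assms] card_image by metis
qed

lemma refl_iso_refl_orders:
  assumes "refl_iso f (gen_grp S) (gen_grp T)"
  shows "refl_orders (gen_grp S) = refl_orders (gen_grp T)"
proof -
  have "has_order (f s) k \<longleftrightarrow> has_order s k" if "s \<in> reflections (gen_grp S)" for s k
    using that refl_iso_has_order[OF assms] by (simp add: reflections_def)
  then show ?thesis
    unfolding refl_orders_def refl_iso_reflections[OF assms, symmetric] by auto
qed

lemma refl_iso_refl_prod_orders:
  assumes "refl_iso f (gen_grp S) (gen_grp T)"
  shows "refl_prod_orders (gen_grp S) = refl_prod_orders (gen_grp T)"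
proof -
  have "has_order (mmul (f x) (f y)) k \<longleftrightarrow> has_order (mmul x y) k"
    if "x \<in> reflections (gen_grp S)" "y \<in> reflections (gen_grp S)" for x y k
  proof -
    have "x \<in> gen_grp S" "y \<in> gen_grp S" using that by (auto simp: reflections_def)
    then show ?thesis
      using assms refl_iso_has_order[OF assms, of "mmul x y"] gen_grp_mult
      by (simp add: refl_iso_def)
  qed
  then show ?thesis
    unfolding refl_prod_orders_def refl_iso_reflections[OF assms, symmetric] by auto
qed

lemma gen_grp_eq_coset_union:
  assumes H_mult: "\<And>x y. x \<in> H \<Longrightarrow> y \<in> H \<Longrightarrow> mmul x y \<in> H" and "mI \<in> H"
    and tt: "mmul t t = mI" and conj: "\<And>h. h \<in> H \<Longrightarrow> mmul t (mmul h t) \<in> H"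
    and gens: "\<And>s. s \<in> S \<Longrightarrow> s \<in> H \<union> (\<lambda>h. mmul h t) ` H"
    and gens_adj: "\<And>s. s \<in> S \<Longrightarrow> madj s \<in> H \<union> (\<lambda>h. mmul h t) ` H"
    and "H \<subseteq> gen_grp S" "t \<in> gen_grp S"
  shows "gen_grp S = H \<union> (\<lambda>h. mmul h t) ` H"
proof
  let ?G = "H \<union> (\<lambda>h. mmul h t) ` H"
  have t_mult: "mmul t h = mmul (mmul t (mmul h t)) t" for h
    by (simp add: mmul_assoc tt)
  have closed: "mmul x y \<in> ?G" if "x \<in> ?G" "y \<in> ?G" for x y
    using that
  proof (elim UnE imageE)
    fix h1 h2 assume "h1 \<in> H" "x = mmul h1 t" "h2 \<in> H" "y = mmul h2 t"
    then show ?thesis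
      using H_mult conj by (simp add: mmul_assoc)
  next
    fix h1 assume "h1 \<in> H" "x = mmul h1 t" "y \<in> H"
    then have "mmul x y = mmul (mmul h1 (mmul t (mmul y t))) t"
      by (simp add: mmul_assoc t_mult[of y])
    then show ?thesis using H_mult conj \<open>h1 \<in> H\<close> \<open>y \<in> H\<close> by blast
  qed (use H_mult in \<open>auto simp flip: mmul_assoc\<close>)
  show "gen_grp S \<subseteq> ?G"
  proof
    fix g assume "g \<in> gen_grp S"
    then show "g \<in> ?G"
      by (induction g rule: gen_grp.induct) (use \<open>mI \<in> H\<close> closed gens gens_adj in auto)
  qed
  show "?G \<subseteq> gen_grp S"
    using assms(7,8) gen_grp_mult by blast
qed

text \<open>\<open>coset_swap H t t'\<close> sends \<open>h \<in> H\<close> to \<open>h\<close> and \<open>h t\<close> to \<open>h t'\<close>.\<close>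

definition coset_swap :: "m2 set \<Rightarrow> m2 \<Rightarrow> m2 \<Rightarrow> m2 \<Rightarrow> m2" where
  "coset_swap H t t' x = (if x \<in> H then x else mmul x (mmul t t'))"

locale involution_extensions =
  fixes H :: "m2 set" and t t' :: m2
  assumes H_mult: "\<And>x y. x \<in> H \<Longrightarrow> y \<in> H \<Longrightarrow> mmul x y \<in> H"
    and tt: "mmul t t = mI" and tt': "mmul t' t' = mI"
    and conj_in: "\<And>h. h \<in> H \<Longrightarrow> mmul t (mmul h t) \<in> H"
    and conj_eq: "\<And>h. h \<in> H \<Longrightarrow> mmul t (mmul h t) = mmul t' (mmul h t')"
    and coset_t: "\<And>h. h \<in> H \<Longrightarrow> mmul h t \<notin> H"
    and coset_t': "\<And>h. h \<in> H \<Longrightarrow> mmul h t' \<notin> H"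
begin

lemma coset_swap_in: "h \<in> H \<Longrightarrow> coset_swap H t t' h = h"
  by (simp add: coset_swap_def)

lemma t_cancel: "mmul t (mmul t x) = x"
  by (simp add: tt flip: mmul_assoc)

lemma coset_swap_coset: "h \<in> H \<Longrightarrow> coset_swap H t t' (mmul h t) = mmul h t'"
  using coset_t by (simp add: coset_swap_def mmul_assoc t_cancel)

lemma mmul_cancel_t': "mmul (mmul x t') t' = x"
  by (simp add: mmul_assoc tt')

lemma coset_swap_bij:
  "bij_betw (coset_swap H t t') (H \<union> (\<lambda>h. mmul h t) ` H) (H \<union> (\<lambda>h. mmul h t') ` H)"
proof (rule bij_betw_imageI)
  show "inj_on (coset_swap H t t') (H \<union> (\<lambda>h. mmul h t) ` H)"
  proof (rule inj_onI)
    fix x y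
    assume "x \<in> H \<union> (\<lambda>h. mmul h t) ` H" "y \<in> H \<union> (\<lambda>h. mmul h t) ` H"
      and eq: "coset_swap H t t' x = coset_swap H t t' y"
    then show "x = y"
    proof (elim UnE imageE)
      fix h1 h2 assume "h1 \<in> H" "x = mmul h1 t" "h2 \<in> H" "y = mmul h2 t"
      then show "x = y"
        using eq coset_swap_coset by (metis mmul_cancel_t')
    qed (use eq coset_swap_in coset_swap_coset coset_t' in metis)+
  qed
  show "coset_swap H t t' ` (H \<union> (\<lambda>h. mmul h t) ` H) = H \<union> (\<lambda>h. mmul h t') ` H"
    by (simp add: image_Un image_image coset_swap_in coset_swap_coset cong: image_cong)
qed

lemma coset_swap_mult:
  assumes "x \<in> H \<union> (\<lambda>h. mmul h t) ` H" "y \<in> H \<union> (\<lambda>h. mmul h t) ` H"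
  shows "coset_swap H t t' (mmul x y) = mmul (coset_swap H t t' x) (coset_swap H t t' y)"
  using assms
proof (elim UnE imageE)
  fix h1 h2 assume h: "h1 \<in> H" "x = mmul h1 t" "h2 \<in> H" "y = mmul h2 t"
  have "mmul x y = mmul h1 (mmul t (mmul h2 t))"
    by (simp add: h mmul_assoc)
  moreover have "mmul (mmul h1 t') (mmul h2 t') = mmul h1 (mmul t' (mmul h2 t'))"
    by (simp add: mmul_assoc)
  ultimately show ?thesis
    using h conj_in conj_eq H_mult by (simp add: coset_swap_in coset_swap_coset)
next
  fix h1 assume h: "h1 \<in> H" "x = mmul h1 t" "y \<in> H"
  have "mmul x y = mmul (mmul h1 (mmul t (mmul y t))) t"
    by (simp add: h mmul_assoc tt)
  moreover have "mmul (mmul h1 t') y = mmul (mmul h1 (mmul t' (mmul y t'))) t'"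
    by (simp add: mmul_assoc tt')
  ultimately show ?thesis
    using h conj_in conj_eq H_mult by (simp add: coset_swap_in coset_swap_coset)
qed (use H_mult coset_swap_in coset_swap_coset in \<open>simp_all flip: mmul_assoc\<close>)

end

section \<open>The groups \<open>G(n,a,b,r)\<close>\<close>

lemma exists_residue_multiple:
  fixes d k :: int
  assumes "d * int p = N" "d dvd k" "p > 0"
  shows "\<exists>s<p. N dvd k - d * int s"
proof -
  obtain c where k: "k = d * c" using assms(2) by (auto simp: dvd_def)
  have "k - d * (c mod int p) = d * (c - c mod int p)"
    by (simp add: k algebra_simps)
  also have "\<dots> = N * (c div int p)"
    using assms(1) by (simp add: minus_mod_eq_mult_div mult.assoc)
  finally have "k - d * (c mod int p) = N * (c div int p)" .
  moreover have "c mod int p = int (nat (c mod int p))" "nat (c mod int p) < p"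
    using assms(3) by (simp_all add: nat_less_iff)
  ultimately show ?thesis by (metis dvd_triv_left)
qed

lemma eq_of_dvd_scaled_diff:
  assumes "0 < c" "int c * int p dvd int c * (int x - int y)" "x < p" "y < p"
  shows "x = y"
proof -
  have "int p dvd int x - int y" using assms(1,2) by simp
  then have "int x mod int p = int y mod int p" by (simp add: mod_eq_dvd_iff)
  with assms(3,4) show ?thesis by (simp flip: zmod_int)
qed

text \<open>The index \<open>[n, a, b, r]\<close> with \<open>r a b = t n\<close>: \<open>t = 1\<close> for the first family of
  \<open>\<Lambda>\<^sub>n\<close> and \<open>t = 2\<close> for the second.\<close>

locale lambda_index =
  fixes n a b r t :: nat
  assumes n_ge_2: "2 \<le> n" and a_pos: "1 \<le> a" and a_le_b: "a \<le> b"
    and a_dvd_n: "a dvd n" and b_dvd_n: "b dvd n" and coprime_ab: "coprime a b"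
    and t_cases: "t = 1 \<or> t = 2 \<and> odd (a * b)" and r_ab: "r * (a * b) = t * n"
begin

definition G :: "m2 set" where "G = Ggrp n a b r"

definition q :: nat where "q = 2 * n div r"
definition P :: nat where "P = 2 * n div a"
definition Q :: nat where "Q = 2 * n div b"

text \<open>The moduli of the congruence group containing \<open>G\<close>, and \<open>d = gcd P Q\<close>.\<close>

definition sum_mod :: int where "sum_mod = int (2 * b div t)"
definition diff_mod :: int where "diff_mod = int (2 * a div t)"
definition d :: nat where "d = 2 * r div t"

lemma n_pos: "n > 0" using n_ge_2 by simp
lemma b_pos: "b > 0" using a_pos a_le_b by simp

lemma q_mult: "q * t = 2 * a * b" "q * r = 2 * n"
proof -
  have "t dvd 2" using t_cases by auto
  then have "t * n dvd 2 * n" by simp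
  then have "r dvd 2 * n" using r_ab dvd_trans[of r "t * n"] by (metis dvd_triv_left)
  then show "q * r = 2 * n" by (simp add: q_def)
  have "q * t * r = t * (q * r)" by (simp add: ac_simps)
  also have "\<dots> = 2 * (r * (a * b))" using \<open>q * r = 2 * n\<close> r_ab by simp
  finally have "q * t * r = 2 * a * b * r" by (simp add: ac_simps)
  moreover have "r > 0" using r_ab n_pos t_cases a_pos by (cases r) auto
  ultimately show "q * t = 2 * a * b" by simp
qed

lemma P_mult: "a * P = 2 * n" and Q_mult: "b * Q = 2 * n"
  using a_dvd_n b_dvd_n by (simp_all add: P_def Q_def)

lemma r_pos: "r > 0" using q_mult(2) n_pos by (cases r) auto
lemma q_pos: "q > 0" using q_mult(2) n_pos by (cases q) auto
lemma P_pos: "P > 0" using P_mult n_pos by (cases P) auto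
lemma Q_pos: "Q > 0" using Q_mult n_pos by (cases Q) auto

lemma d_mult: "d * t = 2 * r" using t_cases by (auto simp: d_def)

lemma P_eq: "P = d * b" and Q_eq: "Q = d * a"
proof -
  have "2 * n * t = 2 * (r * (a * b))" using r_ab by simp
  then have "2 * n = d * a * b" using d_mult t_cases by (auto simp: algebra_simps)
  then show "P = d * b" "Q = d * a" using P_mult Q_mult a_pos b_pos by (simp_all add: algebra_simps)
qed

lemma d_pos: "d > 0" using P_eq P_pos by simp

lemma two_n_eq: "2 * n = d * a * b" using P_eq P_mult by (simp add: algebra_simps)

lemma t_eq_1_if_r_eq_1: "r = 1 \<Longrightarrow> t = 1"
  using r_ab t_cases by auto

lemma int_mult_eqs:
  "int q * int r = 2 * int n" "int a * int P = 2 * int n" "int b * int Q = 2 * int n"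
  using q_mult(2) P_mult Q_mult by (metis of_nat_mult of_nat_numeral)+

lemma moduli:
  "sum_mod = (if t = 1 then 2 * int b else int b)" "diff_mod = (if t = 1 then 2 * int a else int a)"
  "int q = (if t = 1 then 2 * int a * int b else int a * int b)"
proof -
  have "int q * int t = 2 * int a * int b" using q_mult(1) by (metis of_nat_mult of_nat_numeral)
  then show "int q = (if t = 1 then 2 * int a * int b else int a * int b)" using t_cases by auto
qed (use t_cases in \<open>auto simp: sum_mod_def diff_mod_def\<close>)

lemma moduli_dvd:
  "sum_mod dvd 2 * int n" "diff_mod dvd 2 * int n" "sum_mod dvd 2 * int b" "diff_mod dvd 2 * int a"
  "sum_mod dvd int q" "diff_mod dvd int q"
  using a_dvd_n b_dvd_n by (auto simp: moduli mult_dvd_mono)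

lemma dvd_of_moduli:
  "sum_mod dvd x \<Longrightarrow> diff_mod dvd x \<Longrightarrow> int q dvd x"
  "diff_mod dvd 2 * x \<Longrightarrow> int a dvd x"
  "sum_mod dvd 2 * x \<Longrightarrow> int b dvd x"
proof -
  have cop: "coprime (int a) (int b)" using coprime_ab by simp
  show "int q dvd x" if "sum_mod dvd x" "diff_mod dvd x"
  proof (cases "t = 1")
    case True
    then have "2 * int a dvd x" "2 * int b dvd x" using that unfolding moduli by simp_all
    moreover from this(1) obtain y where "x = 2 * y" by (metis dvd_mult_left dvdE)
    ultimately have "int a * int b dvd y" using cop by (simp add: divides_mult)
    then show ?thesis using True \<open>x = 2 * y\<close> by (simp add: moduli)
  next
    case False
    then have "int a dvd x" "int b dvd x" using that unfolding moduli by simp_all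
    then show ?thesis using False cop by (simp add: moduli divides_mult)
  qed
  show "diff_mod dvd 2 * x \<Longrightarrow> int a dvd x" "sum_mod dvd 2 * x \<Longrightarrow> int b dvd x"
    using t_cases by (auto simp: moduli coprime_dvd_mult_right_iff)
qed

sublocale C: mon_congruence n sum_mod diff_mod 1
  using n_pos moduli_dvd by unfold_locales auto

lemma G_generators:
  "G = gen_grp {mon n False False (int q) 0, mon n True False 0 0, mon n True False (int a) (- int a),
     mon n True True 0 (int n), mon n True True (int b) (int b + int n)}"
proof -
  have "M2 (omega n ^ (2 * n div r)) 0 0 1 = mon n False False (int q) 0"
    by (simp add: q_def omega_power mon_def dic_zero_exp)
  moreover have "Nmat (omega n ^ b * quat_j) = mon n True True (int b) (int b + int n)"
    by (simp add: omega_power dic_mult_rotation Nmat_dic n_pos dic_inv_exp_def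
        flip: dic_zero_exp(2)[of n])
  ultimately show ?thesis
    by (simp add: G_def Ggrp_def omega_power Nmat_dic n_pos dic_inv_exp_def insert_commute
        flip: dic_zero_exp[of n])
qed

lemma G_mult: "x \<in> G \<Longrightarrow> y \<in> G \<Longrightarrow> mmul x y \<in> G"
  by (simp add: G_def Ggrp_def gen_grp_mult)

lemma G_subset_congruence_group: "G \<subseteq> C.group"
  unfolding G_generators
  by (rule C.gen_grp_subset_group)
     (use moduli_dvd in \<open>simp add: C.mon_in_group_iff C.cond_def sum_exp_def diff_exp_def\<close>)

text \<open>The reflections of \<open>G\<close>: \<open>diag(\<omega>\<^sup>q\<^sup>s, 1)\<close>, \<open>diag(1, \<omega>\<^sup>q\<^sup>s)\<close>, \<open>N(\<omega>\<^sup>a\<^sup>s)\<close> and \<open>N(\<omega>\<^sup>b\<^sup>s j)\<close>.\<close>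

definition refl_diag_left :: "m2 set" where
  "refl_diag_left = (\<lambda>s. mon n False False (int q * int s) 0) ` {1..<r}"
definition refl_diag_right :: "m2 set" where
  "refl_diag_right = (\<lambda>s. mon n False False 0 (int q * int s)) ` {1..<r}"
definition refl_anti :: "m2 set" where
  "refl_anti = (\<lambda>s. mon n True False (int a * int s) (- (int a * int s))) ` {..<P}"
definition refl_anti_j :: "m2 set" where
  "refl_anti_j = (\<lambda>s. mon n True True (int b * int s) (int b * int s + int n)) ` {..<Q}"

lemma not_dvd_q_mult:
  assumes "0 < s" "s < r"
  shows "\<not> 2 * int n dvd int q * int s"
proof
  assume "2 * int n dvd int q * int s"
  then have "int q * int r dvd int q * int s" by (simp add: int_mult_eqs(1))
  then have "r dvd s" using q_pos by simp
  with assms show False by (auto dest: dvd_imp_le)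
qed

lemma refl_families_in_G:
  "mon n False False (int q * i) 0 \<in> G" "mon n False False 0 (int q * i) \<in> G"
  "mon n True False (int a * i) (- (int a * i)) \<in> G"
  "mon n True True (int b * i) (int b * i + int n) \<in> G"
  if "i \<ge> 0"
proof -
  obtain j where i: "i = int j" using \<open>i \<ge> 0\<close> by (metis nonneg_eq_int)
  have gens: "mon n False False (int q) 0 \<in> G" "mon n True False 0 0 \<in> G"
    "mon n True False (int a) (- int a) \<in> G" "mon n True True 0 (int n) \<in> G"
    "mon n True True (int b) (int b + int n) \<in> G"
    unfolding G_generators by (simp_all add: gen_grp_generator)
  have pow: "mpow x j \<in> G" if "x \<in> G" for x
    using that mpow_gen_grp by (simp add: G_def Ggrp_def)
  show "mon n False False (int q * i) 0 \<in> G"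
    using pow[OF gens(1)] by (simp add: i mpow_mon_diagonal mult.commute)
  then have "mmul (mon n True False 0 0) (mmul (mon n False False (int q * i) 0) (mon n True False 0 0)) \<in> G"
    using gens(2) G_mult by blast
  then show "mon n False False 0 (int q * i) \<in> G"
    by (simp add: mmul_mon n_pos dic_mult_exp_def)
  have "mmul (mpow (mmul (mon n True False (int a) (- int a)) (mon n True False 0 0)) j)
      (mon n True False 0 0) \<in> G"
    using gens G_mult pow by blast
  then show "mon n True False (int a * i) (- (int a * i)) \<in> G"
    by (simp add: i mmul_mon n_pos dic_mult_exp_def mpow_mon_diagonal algebra_simps)
  have "mmul (mpow (mmul (mon n True True (int b) (int b + int n)) (mon n True True 0 (int n))) j)
      (mon n True True 0 (int n)) \<in> G"
    using gens G_mult pow by blast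
  moreover have "mmul (mpow (mmul (mon n True True (int b) (int b + int n)) (mon n True True 0 (int n))) j)
      (mon n True True 0 (int n)) = mon n True True (int b * i) (int b * i + int n)"
    by (simp add: i mmul_mon n_pos dic_mult_exp_def mpow_mon_diagonal mon_eq_iff algebra_simps)
  ultimately show "mon n True True (int b * i) (int b * i + int n) \<in> G" by simp
qed

lemma refl_families_subset: "refl_diag_left \<union> refl_diag_right \<union> refl_anti \<union> refl_anti_j \<subseteq> reflections G"
  using not_dvd_q_mult refl_families_in_G
  by (auto simp: reflections_def refl_diag_left_def refl_diag_right_def refl_anti_def refl_anti_j_def
      is_reflection_mon n_pos)

lemma diagonal_exponent_q_multiple:
  assumes "C.cond False k1 k2" "2 * int n dvd k1" "\<not> 2 * int n dvd k2"
  shows "\<exists>s\<in>{1..<r}. 2 * int n dvd k2 - int q * int s"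
proof -
  have "sum_mod dvd k2" "diff_mod dvd k2"
    using assms(1) dvd_trans[OF moduli_dvd(1) assms(2)] dvd_trans[OF moduli_dvd(2) assms(2)]
    by (auto simp: C.cond_def sum_exp_def diff_exp_def dest: dvd_diff[of _ "k1 + k2" k1] dvd_diff[of _ k1 "k1 - k2"])
  then have "int q dvd k2" by (rule dvd_of_moduli(1))
  then obtain s where "s < r" "2 * int n dvd k2 - int q * int s"
    using exists_residue_multiple[OF int_mult_eqs(1)] r_pos by blast
  moreover have "s \<noteq> 0"
  proof
    assume "s = 0"
    with calculation(2) have "2 * int n dvd k2" by simp
    with assms(3) show False ..
  qed
  ultimately show ?thesis by auto
qed

lemma diagonal_reflection_mem:
  assumes "C.cond e k1 k2" "is_reflection (mon n False e k1 k2)"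
  shows "mon n False e k1 k2 \<in> refl_diag_left \<union> refl_diag_right"
proof -
  from assms(2) have e: "\<not> e" and dvd: "(2 * int n dvd k1) \<noteq> (2 * int n dvd k2)"
    by (simp_all add: is_reflection_mon n_pos)
  show ?thesis
  proof (cases "2 * int n dvd k1")
    case True
    with diagonal_exponent_q_multiple[of k1 k2] assms(1) e dvd
    obtain i where "i \<in> {1..<r}" "2 * int n dvd k2 - int q * int i" by auto
    then show ?thesis
      using True e by (auto simp: refl_diag_right_def mon_eq_iff n_pos)
  next
    case False
    with diagonal_exponent_q_multiple[of k2 k1] assms(1) e dvd C.cond_swap
    obtain i where "i \<in> {1..<r}" "2 * int n dvd k1 - int q * int i" by auto
    then show ?thesis
      using False dvd e by (auto simp: refl_diag_left_def mon_eq_iff n_pos)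
  qed
qed

lemma antidiagonal_reflection_mem:
  assumes "C.cond False k1 k2" "is_reflection (mon n True False k1 k2)"
  shows "mon n True False k1 k2 \<in> refl_anti"
proof -
  from assms(2) have sum: "2 * int n dvd k1 + k2" by (simp add: is_reflection_mon n_pos)
  have "diff_mod dvd k1 - k2" using assms(1) by (simp add: C.cond_def diff_exp_def)
  with dvd_trans[OF moduli_dvd(2) sum] have "diff_mod dvd (k1 + k2) + (k1 - k2)"
    by (rule dvd_add)
  then have "diff_mod dvd 2 * k1" by (simp add: algebra_simps)
  then have "int a dvd k1" by (rule dvd_of_moduli(2))
  then obtain i where "i < P" "2 * int n dvd k1 - int a * int i"
    using exists_residue_multiple[OF int_mult_eqs(2)] P_pos by blast
  moreover from dvd_diff[OF sum this(2)] have "2 * int n dvd k2 - - (int a * int i)"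
    by (simp add: algebra_simps)
  ultimately show ?thesis
    by (auto simp: refl_anti_def mon_eq_iff n_pos)
qed

lemma antidiagonal_j_reflection_mem:
  assumes "C.cond True k1 k2" "is_reflection (mon n True True k1 k2)"
  shows "mon n True True k1 k2 \<in> refl_anti_j"
proof -
  from assms(2) have dif: "2 * int n dvd k2 - k1 + int n" by (simp add: is_reflection_mon n_pos)
  have "sum_mod dvd k1 + k2 - int n" using assms(1) by (simp add: C.cond_def sum_exp_def)
  from dvd_add[OF dvd_diff[OF this dvd_trans[OF moduli_dvd(1) dif]] moduli_dvd(1)]
  have "sum_mod dvd (k1 + k2 - int n) - (k2 - k1 + int n) + 2 * int n" .
  then have "sum_mod dvd 2 * k1" by (simp add: algebra_simps)
  then have "int b dvd k1" by (rule dvd_of_moduli(3))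
  then obtain i where "i < Q" "2 * int n dvd k1 - int b * int i"
    using exists_residue_multiple[OF int_mult_eqs(3)] Q_pos by blast
  moreover from dvd_diff[OF dvd_add[OF dif this(2)] dvd_refl[of "2 * int n"]]
  have "2 * int n dvd k2 - (int b * int i + int n)"
    by (simp add: algebra_simps)
  ultimately show ?thesis
    by (auto simp: refl_anti_j_def mon_eq_iff n_pos)
qed

lemma reflections_G: "reflections G = refl_diag_left \<union> refl_diag_right \<union> refl_anti \<union> refl_anti_j"
proof
  show "reflections G \<subseteq> refl_diag_left \<union> refl_diag_right \<union> refl_anti \<union> refl_anti_j"
  proof
    fix g assume "g \<in> reflections G"
    then obtain s e k1 k2 where g: "g = mon n s e k1 k2" "C.cond e k1 k2" "is_reflection g"
      using G_subset_congruence_group by (auto simp: reflections_def C.group_def)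
    then show "g \<in> refl_diag_left \<union> refl_diag_right \<union> refl_anti \<union> refl_anti_j"
      using diagonal_reflection_mem antidiagonal_reflection_mem antidiagonal_j_reflection_mem
      by (cases s; cases e) auto
  qed
qed (rule refl_families_subset)

lemma card_reflections_G: "card (reflections G) = 2 * (r - 1) + P + Q"
proof -
  have inj: "inj_on (\<lambda>s. mon n False False (int q * int s) 0) {1..<r}"
    "inj_on (\<lambda>s. mon n False False 0 (int q * int s)) {1..<r}"
    "inj_on (\<lambda>s. mon n True False (int a * int s) (- (int a * int s))) {..<P}"
    "inj_on (\<lambda>s. mon n True True (int b * int s) (int b * int s + int n)) {..<Q}"
    using eq_of_dvd_scaled_diff[of q r] eq_of_dvd_scaled_diff[of a P] eq_of_dvd_scaled_diff[of b Q]
      q_pos a_pos b_pos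
    by (auto intro!: inj_onI simp: mon_eq_iff n_pos int_mult_eqs right_diff_distrib)
  have "refl_diag_left \<inter> refl_diag_right = {}"
    using not_dvd_q_mult by (fastforce simp: refl_diag_left_def refl_diag_right_def mon_eq_iff n_pos)
  moreover have "(refl_diag_left \<union> refl_diag_right) \<inter> refl_anti = {}"
    "(refl_diag_left \<union> refl_diag_right \<union> refl_anti) \<inter> refl_anti_j = {}"
    by (auto simp: refl_diag_left_def refl_diag_right_def refl_anti_def refl_anti_j_def
        mon_eq_iff n_pos)
  ultimately show ?thesis
    using inj unfolding reflections_G
    by (simp add: card_Un_disjoint card_image refl_diag_left_def refl_diag_right_def
        refl_anti_def refl_anti_j_def)
qed

lemma reflection_shapes:
  assumes "x \<in> reflections G"
  obtains i j where "x = mon n False False (int q * i) (int q * j)"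
    | i where "x = mon n True False (int a * i) (- (int a * i))"
    | i where "x = mon n True True (int b * i) (int b * i + int n)"
  using assms unfolding reflections_G
  by (auto simp: refl_diag_left_def refl_diag_right_def refl_anti_def refl_anti_j_def)
     (metis mult_zero_right)+

lemma mpow_reflection:
  assumes "x \<in> reflections G"
  shows "mpow x r = mI \<or> mpow x 2 = mI"
  using assms
proof (cases rule: reflection_shapes)
  case (1 i j)
  then show ?thesis
    using int_mult_eqs(1) by (simp add: mpow_mon_diagonal_eq_mI_iff n_pos algebra_simps)
qed (simp_all add: mpow_2 mmul_mon_self n_pos mon_eq_mI_iff)

lemma refl_orders_G:
  "refl_orders G \<subseteq> {k. k dvd 2 \<or> k dvd r}" "2 \<le> r \<Longrightarrow> r \<in> refl_orders G"
proof -
  show "refl_orders G \<subseteq> {k. k dvd 2 \<or> k dvd r}"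
    using mpow_reflection has_order_dvd by (fastforce simp: refl_orders_def)
  assume "2 \<le> r"
  then have "mon n False False (int q * int 1) 0 \<in> reflections G"
    using refl_families_subset by (force simp: refl_diag_left_def)
  moreover have "has_order (mon n False False (int q) 0) r"
    using int_mult_eqs(1) q_pos by (intro has_order_mon_diagonal[of n q]) (simp_all add: n_pos)
  ultimately show "r \<in> refl_orders G" by (auto simp: refl_orders_def)
qed

lemma refl_prod_orders_G:
  "P \<in> refl_prod_orders G" "Q \<in> refl_prod_orders G"
proof -
  have "2 \<le> c" if "x * c = 2 * n" "x dvd n" for x c
  proof (rule ccontr)
    assume "\<not> 2 \<le> c"
    then have "x * c \<le> x" by (cases c) auto
    moreover have "x \<le> n" using that(2) n_pos by (simp add: dvd_imp_le)
    ultimately show False using that(1) n_pos by simp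
  qed
  then have P2: "2 \<le> P" and Q2: "2 \<le> Q" using P_mult Q_mult a_dvd_n b_dvd_n by auto
  have mem: "mon n True False (int a * int i) (- (int a * int i)) \<in> reflections G"
    "mon n True True (int b * int i) (int b * int i + int n) \<in> reflections G" if "i < 2" for i
    using refl_families_subset that P2 Q2 unfolding refl_anti_def refl_anti_j_def
    by (auto intro!: imageI)
  have "has_order (mmul (mon n True False 0 0) (mon n True False (int a) (- int a))) P"
    using int_mult_eqs(2) a_pos
    by (simp add: mmul_mon n_pos dic_mult_exp_def, intro has_order_mon_diagonal)
       (simp_all add: n_pos mult.commute)
  moreover have "has_order (mmul (mon n True True 0 (int n)) (mon n True True (int b) (int b + int n))) Q"
    using int_mult_eqs(3) b_pos
    by (simp add: mmul_mon n_pos dic_mult_exp_def, intro has_order_mon_diagonal)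
       (simp_all add: n_pos algebra_simps)
  ultimately show "P \<in> refl_prod_orders G" "Q \<in> refl_prod_orders G"
    using mem[of 0] mem[of 1] unfolding refl_prod_orders_def by force+
qed

lemma mpow_product_shapes:
  "mpow (mon n False False (int q * c) (int q * c')) (2 * r) = mI"
  "mpow (mon n True False (int q * c + k) (int q * c' - k)) (2 * r) = mI"
  "mpow (mon n True True (int q * c + k) (k - int q * c' + int n)) (2 * r) = mI"
  "mpow (mon n False False (int a * c) (- (int a * c))) P = mI"
  "mpow (mon n False False (int b * c) (int b * c + 2 * int n)) Q = mI"
  "mpow (mon n False True k1 k2) 4 = mI"
proof -
  have diag: "mpow (mon n False False (int q * c) (int q * c')) r = mI" for c c'
    using int_mult_eqs(1) by (simp add: mpow_mon_diagonal_eq_mI_iff n_pos algebra_simps)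
  show "mpow (mon n False False (int q * c) (int q * c')) (2 * r) = mI"
    using int_mult_eqs(1) by (simp add: mpow_mon_diagonal_eq_mI_iff n_pos algebra_simps)
  show "mpow (mon n True False (int q * c + k) (int q * c' - k)) (2 * r) = mI"
    unfolding mpow_double using diag[of "c + c'" "c + c'"]
    by (simp add: mmul_mon_self n_pos algebra_simps)
  have "mmul (mon n True True (int q * c + k) (k - int q * c' + int n))
      (mon n True True (int q * c + k) (k - int q * c' + int n))
    = mon n False False (int q * (c + c')) (int q * (- (c + c')))"
    by (simp add: mmul_mon_self n_pos mon_eq_iff algebra_simps)
  then show "mpow (mon n True True (int q * c + k) (k - int q * c' + int n)) (2 * r) = mI"
    unfolding mpow_double by (simp add: diag)
  show "mpow (mon n False False (int a * c) (- (int a * c))) P = mI"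
    using int_mult_eqs(2) by (simp add: mpow_mon_diagonal_eq_mI_iff n_pos algebra_simps)
  show "mpow (mon n False False (int b * c) (int b * c + 2 * int n)) Q = mI"
    using int_mult_eqs(3) by (simp add: mpow_mon_diagonal_eq_mI_iff n_pos algebra_simps)
  show "mpow (mon n False True k1 k2) 4 = mI"
    using mpow_double[of "mon n False True k1 k2" 2]
    by (simp add: mmul_mon_self n_pos mpow_2 mmul_mon dic_mult_exp_def mon_eq_mI_iff)
qed

definition bounded_order :: "m2 \<Rightarrow> bool" where
  "bounded_order x \<longleftrightarrow> mpow x (2 * r) = mI \<or> mpow x P = mI \<or> mpow x Q = mI \<or> mpow x 4 = mI"

text \<open>Products with a diagonal factor are \<open>q\<close>-divisible after squaring; products of two
  anti-diagonal factors are diagonal.\<close>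

lemma bounded_order_diagonal_product:
  assumes "x = mon n False False (int q * i1) (int q * i2)" "y \<in> reflections G"
  shows "bounded_order (mmul x y)"
  using assms(2)
proof (cases rule: reflection_shapes)
  case (1 j1 j2)
  then have "mmul x y = mon n False False (int q * (i1 + j1)) (int q * (i2 + j2))"
    using assms(1) by (simp add: mmul_mon n_pos dic_mult_exp_def mon_eq_iff algebra_simps)
  then show ?thesis using mpow_product_shapes(1)[of "i1 + j1" "i2 + j2"] by (simp add: bounded_order_def)
next
  case (2 j)
  then have "mmul x y = mon n True False (int q * i1 + int a * j) (int q * i2 - int a * j)"
    using assms(1) by (simp add: mmul_mon n_pos dic_mult_exp_def mon_eq_iff algebra_simps)
  then show ?thesis using mpow_product_shapes(2)[of i1 "int a * j" i2] by (simp add: bounded_order_def)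
next
  case (3 j)
  then have "mmul x y = mon n True True (int q * i1 + int b * j) (int b * j - int q * (- i2) + int n)"
    using assms(1) by (simp add: mmul_mon n_pos dic_mult_exp_def mon_eq_iff algebra_simps)
  then show ?thesis using mpow_product_shapes(3)[of i1 "int b * j" "- i2"] by (simp add: bounded_order_def)
qed

lemma bounded_order_antidiagonal_product:
  assumes "x = mon n True False (int a * i) (- (int a * i))" "y \<in> reflections G"
  shows "bounded_order (mmul x y)"
  using assms(2)
proof (cases rule: reflection_shapes)
  case (1 j1 j2)
  then have "mmul x y = mon n True False (int q * j2 + int a * i) (int q * j1 - int a * i)"
    using assms(1) by (simp add: mmul_mon n_pos dic_mult_exp_def mon_eq_iff algebra_simps)
  then show ?thesis using mpow_product_shapes(2)[of j2 "int a * i" j1] by (simp add: bounded_order_def)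
next
  case (2 j)
  then have "mmul x y = mon n False False (int a * (i - j)) (- (int a * (i - j)))"
    using assms(1) by (simp add: mmul_mon n_pos dic_mult_exp_def mon_eq_iff algebra_simps)
  then show ?thesis using mpow_product_shapes(4)[of "i - j"] by (simp add: bounded_order_def)
qed (use assms(1) mpow_product_shapes(6) in \<open>simp add: bounded_order_def mmul_mon n_pos dic_mult_exp_def\<close>)

lemma bounded_order_antidiagonal_j_product:
  assumes "x = mon n True True (int b * i) (int b * i + int n)" "y \<in> reflections G"
  shows "bounded_order (mmul x y)"
  using assms(2)
proof (cases rule: reflection_shapes)
  case (1 j1 j2)
  then have "mmul x y = mon n True True (int q * (- j2) + int b * i) (int b * i - int q * j1 + int n)"
    using assms(1) by (simp add: mmul_mon n_pos dic_mult_exp_def mon_eq_iff algebra_simps)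
  then show ?thesis using mpow_product_shapes(3)[of "- j2" "int b * i" j1] by (simp add: bounded_order_def)
next
  case (3 j)
  then have "mmul x y = mon n False False (int b * (i - j)) (int b * (i - j) + 2 * int n)"
    using assms(1) by (simp add: mmul_mon n_pos dic_mult_exp_def mon_eq_iff algebra_simps)
  then show ?thesis using mpow_product_shapes(5)[of "i - j"] by (simp add: bounded_order_def)
qed (use assms(1) mpow_product_shapes(6) in \<open>simp add: bounded_order_def mmul_mon n_pos dic_mult_exp_def\<close>)

lemma refl_prod_orders_dvd:
  assumes "k \<in> refl_prod_orders G"
  shows "k dvd 2 * r \<or> k dvd P \<or> k dvd Q \<or> k dvd 4"
proof -
  obtain x y where xy: "x \<in> reflections G" "y \<in> reflections G" "has_order (mmul x y) k"
    using assms by (auto simp: refl_prod_orders_def)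
  from xy(1) have "bounded_order (mmul x y)"
  proof (cases rule: reflection_shapes)
    case 1
    then show ?thesis using bounded_order_diagonal_product xy(2) by blast
  next
    case 2
    then show ?thesis using bounded_order_antidiagonal_product xy(2) by blast
  next
    case 3
    then show ?thesis using bounded_order_antidiagonal_j_product xy(2) by blast
  qed
  then show ?thesis using has_order_dvd[OF xy(3)] unfolding bounded_order_def by blast
qed

end

context lambda_index
begin

lemma P_eq_Q_if_b_eq_1:
  assumes "b = 1"
  shows "P = d \<and> Q = d"
  unfolding P_eq Q_eq using assms a_pos a_le_b by simp

lemma gcd_P_Q: "gcd P Q = d"
proof -
  have "gcd P Q = d * gcd b a" unfolding P_eq Q_eq by (simp add: gcd_mult_distrib_nat)
  then show ?thesis using coprime_ab by (simp add: coprime_commute coprime_iff_gcd_eq_1)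
qed

lemma Q_le_P: "Q \<le> P" using a_le_b by (simp add: P_eq Q_eq)

lemma b_small_if_P_dvd:
  assumes "P dvd 2 * r \<or> P dvd 4"
  shows "b = 1 \<or> d = 2 \<and> b = 2"
proof (rule ccontr)
  assume "\<not> (b = 1 \<or> d = 2 \<and> b = 2)"
  moreover have "b \<noteq> 1 \<Longrightarrow> b \<ge> 2" using b_pos by simp
  ultimately have b2: "b \<ge> 2" and not22: "\<not> (d = 2 \<and> b = 2)" by auto
  from assms show False
  proof
    assume "P dvd 2 * r"
    then have "d * b dvd d * t" using P_eq d_mult by (simp add: mult.commute)
    then have "b \<le> t" using d_pos t_cases by (auto dest: dvd_imp_le)
    then show False using t_cases b2 coprime_ab by auto
  next
    assume "P dvd 4"
    then have db: "d * b \<le> 4" using P_eq by (auto dest: dvd_imp_le)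
    moreover have "d * 2 \<le> d * b" using b2 by simp
    ultimately have "d \<le> 2" by linarith
    moreover have "d \<noteq> 1" using d_mult t_cases t_eq_1_if_r_eq_1 by auto
    ultimately have "d = 2" using d_pos by simp
    with db b2 not22 show False by simp
  qed
qed

end

locale lambda_index_pair = A: lambda_index n a b r t + B: lambda_index n' a' b' r' t'
  for n a b r t n' a' b' r' t'
begin

text \<open>The numerical invariants of \<open>A.G\<close> and \<open>B.G\<close> that a reflection isomorphism preserves.\<close>

definition invariants_match :: bool where
  "invariants_match \<longleftrightarrow> 2 * (r - 1) + A.P + A.Q = 2 * (r' - 1) + B.P + B.Q
    \<and> (2 \<le> r \<longrightarrow> r dvd 2 \<or> r dvd r') \<and> (2 \<le> r' \<longrightarrow> r' dvd 2 \<or> r' dvd r)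
    \<and> (\<forall>w\<in>{B.P, B.Q}. w dvd 2 * r \<or> w dvd A.P \<or> w dvd A.Q \<or> w dvd 4)
    \<and> (\<forall>w\<in>{A.P, A.Q}. w dvd 2 * r' \<or> w dvd B.P \<or> w dvd B.Q \<or> w dvd 4)"

lemma invariants_match_swap:
  "invariants_match \<Longrightarrow> lambda_index_pair.invariants_match n' a' b' r' n a b r"
proof -
  interpret swap: lambda_index_pair n' a' b' r' t' n a b r t ..
  show "invariants_match \<Longrightarrow> swap.invariants_match"
    by (auto simp: invariants_match_def swap.invariants_match_def)
qed

lemma not_P_less_if_same_r:
  assumes "r = r'" and sum: "A.P + A.Q = B.P + B.Q"
    and P_dvd: "A.P dvd 2 * r' \<or> A.P dvd B.P \<or> A.P dvd B.Q \<or> A.P dvd 4"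
  shows "\<not> B.P < A.P"
proof
  assume less: "B.P < A.P"
  then have "\<not> A.P dvd B.P" "\<not> A.P dvd B.Q"
    using B.P_pos B.Q_pos B.Q_le_P by (auto dest: dvd_imp_le)
  with P_dvd assms(1) have "A.P dvd 2 * r \<or> A.P dvd 4" by auto
  then have "b = 1 \<or> A.d = 2 \<and> b = 2" by (rule A.b_small_if_P_dvd)
  moreover have "\<not> (A.d = 2 \<and> b = 2)"
  proof
    assume "A.d = 2 \<and> b = 2"
    then have d: "A.d = 2" and b: "b = 2" by simp_all
    then have "a = 1" using A.a_pos A.a_le_b A.coprime_ab by (cases "a = 2") auto
    with d b have "A.P = 4" "A.Q = 2" unfolding A.P_eq A.Q_eq by simp_all
    then have "B.P + B.Q = 6" "B.P < 4" using sum less by simp_all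
    then have "B.P = 3" "B.Q = 3" using B.Q_le_P by simp_all
    then have "B.d * b' = 3" "B.d * a' = 3" unfolding B.P_eq B.Q_eq .
    then have "a' = b'" using B.d_pos by (metis mult_left_cancel neq0_conv)
    then have "B.d = 3" using \<open>B.d * b' = 3\<close> B.coprime_ab by simp
    then have "3 * t' = 2 * t" using A.d_mult B.d_mult d assms(1) by simp
    then show False using A.t_cases B.t_cases by auto
  qed
  ultimately have "b = 1" by blast
  then show False using sum less B.Q_le_P A.P_eq_Q_if_b_eq_1 by simp
qed

text \<open>Equal invariants force equal indices: \<open>P\<close> and \<open>Q\<close> determine \<open>d = gcd P Q\<close>, hence \<open>a\<close>,
  \<open>b\<close> and \<open>n\<close>.\<close>

lemma index_eq_if_same_r:
  assumes "invariants_match" "r = r'"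
  shows "(n, a, b, r) = (n', a', b', r')"
proof -
  interpret swap: lambda_index_pair n' a' b' r' t' n a b r t ..
  have match: "2 * (r - 1) + A.P + A.Q = 2 * (r' - 1) + B.P + B.Q"
    "A.P dvd 2 * r' \<or> A.P dvd B.P \<or> A.P dvd B.Q \<or> A.P dvd 4"
    "B.P dvd 2 * r \<or> B.P dvd A.P \<or> B.P dvd A.Q \<or> B.P dvd 4"
    using assms(1) unfolding invariants_match_def by simp_all
  then have sum: "A.P + A.Q = B.P + B.Q" using assms(2) by simp
  have "A.P = B.P"
    using not_P_less_if_same_r[OF assms(2) sum match(2)]
      swap.not_P_less_if_same_r[OF assms(2)[symmetric] sum[symmetric] match(3)] by simp
  moreover from this have "A.Q = B.Q" using sum by simp
  ultimately have d: "A.d = B.d" using A.gcd_P_Q B.gcd_P_Q by simp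
  have "A.d * b = A.d * b'" "A.d * a = A.d * a'"
    using \<open>A.P = B.P\<close> \<open>A.Q = B.Q\<close> d unfolding A.P_eq A.Q_eq B.P_eq B.Q_eq by simp_all
  then have "b = b'" "a = a'" using A.d_pos by simp_all
  moreover from this have "n = n'" using A.two_n_eq B.two_n_eq d by simp
  ultimately show ?thesis using assms(2) by simp
qed

context
  assumes r: "r = 1" and r': "r' = 2" and match: invariants_match
begin

lemma r1_shapes: "t = 1" "A.P = 2 * b" "A.Q = 2 * a" "n = a * b" "B.d * t' = 4"
proof -
  show t: "t = 1" using A.t_eq_1_if_r_eq_1 r by simp
  have "A.d = 2" using A.d_mult r t by simp
  then show "A.P = 2 * b" "A.Q = 2 * a" "n = a * b"
    using A.P_eq A.Q_eq A.two_n_eq by simp_all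
  show "B.d * t' = 4" using B.d_mult r' by simp
qed

lemma r1_invariants:
  "2 * (a + b) = 2 + B.P + B.Q"
  "B.P dvd 2 \<or> B.P dvd 2 * b \<or> B.P dvd 2 * a \<or> B.P dvd 4"
  "B.Q dvd 2 \<or> B.Q dvd 2 * b \<or> B.Q dvd 2 * a \<or> B.Q dvd 4"
  "2 * b dvd 4 \<or> 2 * b dvd B.P \<or> 2 * b dvd B.Q"
  "2 * a dvd 4 \<or> 2 * a dvd B.P \<or> 2 * a dvd B.Q"
  using match r r' r1_shapes unfolding invariants_match_def by auto

lemma r1_r2_first_family_shape:
  assumes "t' = 1"
  shows "b = 2 * b'" "a = 1 + 2 * a'" "B.P = 4 * b'" "B.Q = 4 * a'"
proof -
  have "B.d = 4" using r1_shapes(5) assms by simp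
  then show P': "B.P = 4 * b'" "B.Q = 4 * a'" using B.P_eq B.Q_eq by simp_all
  have sum: "a + b = 1 + 2 * a' + 2 * b'" using r1_invariants(1) P' by simp
  have b_dvd: "b dvd 2 \<or> b dvd 2 * b' \<or> b dvd 2 * a'"
    using r1_invariants(4) P' by (simp add: mult.assoc)
  have "b' \<noteq> 1"
  proof
    assume "b' = 1"
    then have "b \<le> 2" using b_dvd B.a_pos B.a_le_b by (auto dest: dvd_imp_le)
    then show False using sum \<open>b' = 1\<close> A.a_le_b B.a_pos by simp
  qed
  then have b'2: "b' \<ge> 2" using B.a_pos B.a_le_b by simp
  have "4 * b' dvd 2 * b \<or> 4 * b' dvd 2 * a"
    using r1_invariants(2) P' b'2 by (auto dest: dvd_imp_le)
  then have "2 * b' dvd b \<or> 2 * b' dvd a" by (simp add: mult.assoc)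
  moreover have "\<not> 2 * b' dvd a"
  proof
    assume "2 * b' dvd a"
    then have "2 * b' \<le> a" using A.a_pos by (auto dest: dvd_imp_le)
    moreover have "b \<le> 2 * b' \<or> b \<le> 2 * a'"
      using b_dvd calculation b'2 A.a_le_b B.a_pos by (auto dest: dvd_imp_le)
    ultimately have "a = b" using A.a_le_b B.a_le_b by auto
    then show False using A.coprime_ab \<open>2 * b' \<le> a\<close> b'2 by simp
  qed
  ultimately have h: "2 * b' dvd b" by simp
  then have ge: "2 * b' \<le> b" using A.b_pos by (auto dest: dvd_imp_le)
  have "\<not> b dvd 2 * a'"
  proof
    assume "b dvd 2 * a'"
    then have "a' = b'" using ge B.a_le_b B.a_pos by (auto dest: dvd_imp_le)
    then show False using B.coprime_ab b'2 by simp
  qed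
  then have "b dvd 2 * b'" using b_dvd ge b'2 by (auto dest: dvd_imp_le)
  then show b: "b = 2 * b'" using h by (simp add: dvd_antisym)
  then show "a = 1 + 2 * a'" using sum by simp
qed

lemma r1_r2_first_family_absurd:
  assumes "t' = 1"
  shows False
proof -
  note shape = r1_r2_first_family_shape[OF assms]
  have "\<not> 4 * a' dvd 2 * a"
  proof
    assume "4 * a' dvd 2 * a"
    moreover have "2 * a = 4 * a' + 2" using shape(2) by simp
    ultimately have "4 * a' dvd 2" by (metis dvd_add_right_iff dvd_refl)
    then show False using B.a_pos by (auto dest: dvd_imp_le)
  qed
  then have "4 * a' dvd 4 * b' \<or> 4 * a' dvd 4"
    using r1_invariants(3) shape B.a_pos by (auto dest: dvd_imp_le)
  then have "a' dvd b' \<or> a' dvd 1" by simp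
  then have "a' = 1" using B.coprime_ab by (auto simp: coprime_absorb_left)
  then have "6 dvd 4 * b'" using r1_invariants(5) shape by auto
  then have "3 dvd b" using shape(1) by presburger
  moreover have "a = 3" using shape(2) \<open>a' = 1\<close> by simp
  ultimately have "a dvd b" by simp
  then have "a = 1" using A.coprime_ab by (simp add: coprime_absorb_left)
  then show False using \<open>a = 3\<close> by simp
qed

lemma r1_r2_second_family_shape:
  assumes "t' = 2"
  shows "b = b'" "a = 1 + a'" "B.P = 2 * b'" "B.Q = 2 * a'" "n' = a' * b'" "odd b'"
proof -
  have "B.d = 2" using r1_shapes(5) assms by simp
  then show P': "B.P = 2 * b'" "B.Q = 2 * a'" "n' = a' * b'"
    using B.P_eq B.Q_eq B.two_n_eq by simp_all
  show odd: "odd b'" using B.t_cases assms by auto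
  have sum: "a + b = 1 + a' + b'" using r1_invariants(1) P' by simp
  have b'3: "b' \<ge> 3"
  proof -
    have "b' \<noteq> 1" using P'(3) B.n_ge_2 B.a_le_b by auto
    then show ?thesis using odd B.a_pos B.a_le_b by (cases "b' = 2") auto
  qed
  have "2 * b' dvd 2 * b \<or> 2 * b' dvd 2 * a"
    using r1_invariants(2) P' b'3 by (auto dest: dvd_imp_le)
  then have "b' dvd b \<or> b' dvd a" by simp
  moreover have b_dvd: "b dvd 2 \<or> b dvd b' \<or> b dvd a'"
    using r1_invariants(4) P' by auto
  moreover have "\<not> b' dvd a"
  proof
    assume "b' dvd a"
    then have "b' \<le> a" using A.a_pos by (auto dest: dvd_imp_le)
    moreover have "b \<le> b' \<or> b \<le> a'"
      using b_dvd calculation b'3 A.a_le_b B.a_pos by (auto dest: dvd_imp_le)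
    ultimately have "a = b" using A.a_le_b B.a_le_b by auto
    then show False using A.coprime_ab \<open>b' \<le> a\<close> b'3 by simp
  qed
  ultimately have h: "b' dvd b" by simp
  then have ge: "b' \<le> b" using A.b_pos by (auto dest: dvd_imp_le)
  have "\<not> b dvd a'"
  proof
    assume "b dvd a'"
    then have "a' = b'" using ge B.a_le_b B.a_pos by (auto dest: dvd_imp_le)
    then show False using B.coprime_ab b'3 by simp
  qed
  then have "b dvd b'" using b_dvd ge b'3 by (auto dest: dvd_imp_le)
  then show "b = b'" using h by (simp add: dvd_antisym)
  then show "a = 1 + a'" using sum by simp
qed

lemma r1_r2_second_family:
  assumes "t' = 2"
  shows "odd b \<and> n = 2 * b \<and> a = 2 \<and> n' = b \<and> a' = 1 \<and> b' = b"
proof -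
  note shape = r1_r2_second_family_shape[OF assms]
  have "\<not> a dvd a'" using shape(2) B.a_pos by (auto dest: dvd_imp_le)
  moreover have "\<not> a dvd b'"
    using A.coprime_ab shape(1,2) B.a_pos by (auto simp: coprime_absorb_left)
  ultimately have "a dvd 2" using r1_invariants(5) shape(3,4) by auto
  then have "a = 2" "a' = 1" using shape(2) B.a_pos by (auto dest: dvd_imp_le)
  then show ?thesis using shape r1_shapes(4) by simp
qed

end

end

context lambda_index_pair
begin

lemma refl_iso_invariants_match:
  assumes "refl_iso f A.G B.G"
  shows invariants_match
proof -
  obtain S T where ST: "A.G = gen_grp S" "B.G = gen_grp T"
    by (simp add: A.G_def B.G_def Ggrp_def)
  have "card (reflections A.G) = card (reflections B.G)"
    using refl_iso_card_reflections[OF assms] .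
  moreover have "refl_orders A.G = refl_orders B.G" "refl_prod_orders A.G = refl_prod_orders B.G"
    using refl_iso_refl_orders refl_iso_refl_prod_orders assms unfolding ST by blast+
  ultimately show ?thesis
    unfolding invariants_match_def
  proof (intro conjI ballI impI)
    assume "card (reflections A.G) = card (reflections B.G)"
    then show "2 * (r - 1) + A.P + A.Q = 2 * (r' - 1) + B.P + B.Q"
      by (simp add: A.card_reflections_G B.card_reflections_G)
  next
    assume "refl_orders A.G = refl_orders B.G" "2 \<le> r"
    then show "r dvd 2 \<or> r dvd r'" using A.refl_orders_G B.refl_orders_G by blast
  next
    assume "refl_orders A.G = refl_orders B.G" "2 \<le> r'"
    then show "r' dvd 2 \<or> r' dvd r" using A.refl_orders_G B.refl_orders_G by blast
  next
    fix w assume "refl_prod_orders A.G = refl_prod_orders B.G" "w \<in> {B.P, B.Q}"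
    then show "w dvd 2 * r \<or> w dvd A.P \<or> w dvd A.Q \<or> w dvd 4"
      using B.refl_prod_orders_G A.refl_prod_orders_dvd by auto
  next
    fix w assume "refl_prod_orders A.G = refl_prod_orders B.G" "w \<in> {A.P, A.Q}"
    then show "w dvd 2 * r' \<or> w dvd B.P \<or> w dvd B.Q \<or> w dvd 4"
      using A.refl_prod_orders_G B.refl_prod_orders_dvd by auto
  qed
qed

lemma invariants_match_r_le_2:
  assumes invariants_match "r \<noteq> r'"
  shows "r \<le> 2 \<and> r' \<le> 2"
proof (rule ccontr)
  have r_dvd: "2 \<le> r \<Longrightarrow> r dvd 2 \<or> r dvd r'" "2 \<le> r' \<Longrightarrow> r' dvd 2 \<or> r' dvd r"
    using assms(1) by (simp_all add: invariants_match_def)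
  have big: "r dvd r'" if "3 \<le> r"
    using r_dvd that by (auto dest: dvd_imp_le)
  have big': "r' dvd r" if "3 \<le> r'"
    using r_dvd that by (auto dest: dvd_imp_le)
  assume "\<not> (r \<le> 2 \<and> r' \<le> 2)"
  then have "2 < r \<or> 2 < r'" by auto
  then have "r dvd r' \<and> r' dvd r"
  proof
    assume "2 < r"
    with big have "r dvd r'" by simp
    then have "3 \<le> r'" using \<open>2 < r\<close> B.r_pos by (auto dest: dvd_imp_le)
    with big' \<open>r dvd r'\<close> show ?thesis by simp
  next
    assume "2 < r'"
    with big' have "r' dvd r" by simp
    then have "3 \<le> r" using \<open>2 < r'\<close> A.r_pos by (auto dest: dvd_imp_le)
    with big \<open>r' dvd r\<close> show ?thesis by simp
  qed
  then show False using assms(2) dvd_antisym by blast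
qed

lemma invariants_match_cases:
  assumes invariants_match "(n, a, b, r) \<noteq> (n', a', b', r')"
  shows "\<exists>m. odd m \<and> {(n, a, b, r), (n', a', b', r')} = {(m, 1, m, 2), (2 * m, 2, m, 1)}"
proof -
  interpret swap: lambda_index_pair n' a' b' r' t' n a b r t ..
  have "r \<noteq> r'" using index_eq_if_same_r assms by auto
  then have "r \<le> 2 \<and> r' \<le> 2" using invariants_match_r_le_2 assms(1) by blast
  then consider "r = 1" "r' = 2" | "r = 2" "r' = 1"
    using \<open>r \<noteq> r'\<close> A.r_pos B.r_pos by linarith
  then show ?thesis
  proof cases
    case 1
    then have "t' = 2" using r1_r2_first_family_absurd assms(1) B.t_cases by blast
    then have "odd b \<and> n = 2 * b \<and> a = 2 \<and> n' = b \<and> a' = 1 \<and> b' = b"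
      using r1_r2_second_family 1 assms(1) by blast
    then show ?thesis using 1 by (intro exI[of _ b]) auto
  next
    case 2
    have match': swap.invariants_match using invariants_match_swap assms(1) .
    then have "t = 2" using swap.r1_r2_first_family_absurd 2 A.t_cases by blast
    then have "odd b' \<and> n' = 2 * b' \<and> a' = 2 \<and> n = b' \<and> a = 1 \<and> b = b'"
      using swap.r1_r2_second_family 2 match' by blast
    then show ?thesis using 2 by (intro exI[of _ b']) auto
  qed
qed

end

lemma Lambda_set_lambda_index:
  assumes "2 \<le> n" "(n, a, b, r) \<in> Lambda_set n"
  obtains t where "lambda_index n a b r t"
proof -
  from assms(2) have ab: "1 \<le> a" "a \<le> b" "a dvd n" "b dvd n" "coprime a b"
    and r: "r = n div (a * b) \<or> odd (a * b) \<and> r = 2 * n div (a * b)"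
    by (auto simp: Lambda_set_def Omega_set_def)
  have "a * b dvd n" using ab by (simp add: divides_mult)
  with r have "r * (a * b) = 1 * n \<or> odd (a * b) \<and> r * (a * b) = 2 * n"
    by (auto simp: dvd_mult2)
  then show ?thesis
    using that ab assms(1) unfolding lambda_index_def by blast
qed

lemma refl_isomorphic_Ggrp_imp_exceptional:
  assumes "2 \<le> n" "2 \<le> n'" "(n, a, b, r) \<in> Lambda_set n" "(n', a', b', r') \<in> Lambda_set n'"
    and "(n, a, b, r) \<noteq> (n', a', b', r')" "refl_isomorphic (Ggrp n a b r) (Ggrp n' a' b' r')"
  shows "\<exists>m. odd m \<and> {(n, a, b, r), (n', a', b', r')} = {(m, 1, m, 2), (2 * m, 2, m, 1)}"
proof -
  obtain t t' where "lambda_index n a b r t" "lambda_index n' a' b' r' t'"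
    using Lambda_set_lambda_index assms(1-4) by metis
  then interpret lambda_index_pair n a b r t n' a' b' r' t'
    by (simp add: lambda_index_pair_def)
  obtain f where "refl_iso f A.G B.G"
    using assms(6) by (auto simp: refl_isomorphic_def A.G_def B.G_def)
  then show ?thesis
    using invariants_match_cases[OF refl_iso_invariants_match] assms(5) by blast
qed

section \<open>The exceptional isomorphism \<open>G(m,1,m,2) \<cong> G(2m,2,m,1)\<close>\<close>

lemma mon_double: "m > 0 \<Longrightarrow> mon (2 * m) s e (2 * k1) (2 * k2) = mon m s e k1 k2"
  by (simp add: mon_def dic_double)

text \<open>Both groups are written in the exponent coordinates of \<open>\<omega>\<^sub>2\<^sub>m\<close>, where \<open>D = diag(1, -1)\<close> and
  \<open>Nk = N(k)\<close>.\<close>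

locale exceptional_indices =
  fixes m :: nat
  assumes m_odd: "odd m" and m_ge_3: "3 \<le> m"
begin

abbreviation mon2 :: "bool \<Rightarrow> bool \<Rightarrow> int \<Rightarrow> int \<Rightarrow> m2" where
  "mon2 \<equiv> mon (2 * m)"

definition H_gens :: "m2 set" where "H_gens = Nmat ` {1, omega m, quat_j}"
definition H :: "m2 set" where "H = gen_grp H_gens"

definition D :: m2 where "D = mon2 False False 0 (2 * int m)"
definition Nk :: m2 where "Nk = mon2 True True (int m) (3 * int m)"
definition minus_I :: m2 where "minus_I = mon2 False False (2 * int m) (2 * int m)"

lemma m_pos: "m > 0" using m_ge_3 by simp

lemmas mon2_simps = mmul_mon mon_eq_iff madj_mon dic_mult_exp_def dic_inv_exp_def m_pos

lemma H_gens_eq: "H_gens = {mon2 True False 0 0, mon2 True False 2 (- 2), mon2 True True 0 (2 * int m)}"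
proof -
  have "Nmat 1 = Nmat (dic (2 * m) False 0)" "Nmat quat_j = Nmat (dic (2 * m) True 0)"
    "Nmat (omega m) = Nmat (dic (2 * m) False 2)"
    using dic_double[OF m_pos, of False 1] by (simp_all add: omega_power[of m 1, simplified] dic_zero_exp)
  then show ?thesis
    by (simp add: H_gens_def Nmat_dic m_pos dic_inv_exp_def)
qed

lemma H_gens_selfadj: "s \<in> H_gens \<Longrightarrow> madj s = s"
  by (auto simp: H_gens_eq mon2_simps)

lemma H_gens_subset_H: "H_gens \<subseteq> H"
  by (auto simp: H_def gen_grp_generator)

lemma H_subset_gen_grp: "H_gens \<subseteq> S \<Longrightarrow> H \<subseteq> gen_grp S"
  unfolding H_def using H_gens_selfadj by (intro gen_grp_subset) (auto intro: gen_grp_generator)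

lemma H_mult: "x \<in> H \<Longrightarrow> y \<in> H \<Longrightarrow> mmul x y \<in> H"
  by (simp add: H_def gen_grp_mult)

lemma mI_in_H: "mI \<in> H"
  by (simp add: H_def gen_grp.gen_one)

lemma H_members:
  "mon2 True False (2 * int k) (- (2 * int k)) \<in> H" "mon2 True True (2 * int m) 0 \<in> H"
  "minus_I \<in> H"
proof -
  have gens: "mon2 True False 0 0 \<in> H" "mon2 True False 2 (- 2) \<in> H" "mon2 True True 0 (2 * int m) \<in> H"
    using H_gens_subset_H by (auto simp: H_gens_eq)
  have "mmul (mpow (mmul (mon2 True False 2 (- 2)) (mon2 True False 0 0)) k) (mon2 True False 0 0) \<in> H"
    for k using gens mpow_gen_grp H_mult unfolding H_def by metis
  moreover have "mmul (mpow (mmul (mon2 True False 2 (- 2)) (mon2 True False 0 0)) k) (mon2 True False 0 0)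
      = mon2 True False (2 * int k) (- (2 * int k))" for k
    by (simp add: mon2_simps mpow_mon_diagonal algebra_simps)
  ultimately show fam: "mon2 True False (2 * int k) (- (2 * int k)) \<in> H" for k
    by simp
  have "mmul (mon2 True False 0 0) (mmul (mon2 True True 0 (2 * int m)) (mon2 True False 0 0)) \<in> H"
    using gens H_mult by blast
  then show "mon2 True True (2 * int m) 0 \<in> H" by (simp add: mon2_simps)
  have "mmul (mon2 True False 0 0) (mon2 True False (2 * int m) (- (2 * int m))) \<in> H"
    using gens(1) fam H_mult by blast
  moreover have "mmul (mon2 True False 0 0) (mon2 True False (2 * int m) (- (2 * int m))) = minus_I"
    by (simp add: minus_I_def mon2_simps)
  ultimately show "minus_I \<in> H" by simp
qed

text \<open>\<open>H\<close> lies in the congruence group with \<open>k1 + k2 \<equiv> 2 e m (mod 4m)\<close> and even exponents (entries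
  in \<open>\<langle>\<omega>\<^sub>m, j\<rangle>\<close>), which contains neither \<open>D\<close> nor \<open>N(k)\<close>.\<close>

sublocale K: mon_congruence "2 * m" "4 * int m" 1 2
  by unfold_locales (simp_all add: m_pos)

lemma H_subset_K: "H \<subseteq> K.group"
  unfolding H_def by (rule K.gen_grp_subset_group) (simp add: H_gens_eq K.mon_in_group_iff K.cond_def sum_exp_def)

lemma D_Nk_not_in_K: "D \<notin> K.group" "Nk \<notin> K.group"
  using m_odd m_pos by (simp_all add: D_def Nk_def K.mon_in_group_iff K.cond_def sum_exp_def)

lemma coset_not_in_H: "h \<in> H \<Longrightarrow> mmul h D \<notin> H" "h \<in> H \<Longrightarrow> mmul h Nk \<notin> H"
  using H_subset_K D_Nk_not_in_K K.group_cancel_left by blast+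

lemma involutions: "mmul D D = mI" "mmul Nk Nk = mI"
  by (simp_all add: D_def Nk_def mon2_simps mI_eq_mon[of "2 * m"])

lemma conj_D_in_H:
  assumes "h \<in> H"
  shows "mmul D (mmul h D) \<in> H"
proof -
  have "mmul D (mmul (mon2 True False 0 0) D) = mon2 True False (2 * int m) (- (2 * int m))"
    "mmul D (mmul (mon2 True False 2 (- 2)) D) = mon2 True False (2 * int (m + 1)) (- (2 * int (m + 1)))"
    "mmul D (mmul (mon2 True True 0 (2 * int m)) D) = mon2 True True (2 * int m) 0"
    by (simp_all add: D_def mon2_simps)
  then have "mmul D (mmul s D) \<in> H" if "s \<in> H_gens" for s
    using that H_members(1)[of m] H_members(1)[of "m + 1"] H_members(2) by (auto simp: H_gens_eq)
  then show ?thesis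
    using assms gen_grp_conj_closed[OF _ H_gens_selfadj involutions(1)] unfolding H_def by blast
qed

text \<open>\<open>D N(k) = antidiag(k, k)\<close> centralises \<open>H\<close>, so \<open>D\<close> and \<open>N(k)\<close> act alike on \<open>H\<close>.\<close>

lemma conj_D_eq_conj_Nk:
  assumes "h \<in> H"
  shows "mmul D (mmul h D) = mmul Nk (mmul h Nk)"
proof -
  have "mmul (mmul D Nk) s = mmul s (mmul D Nk)" if "s \<in> H_gens" for s
    using that by (auto simp: H_gens_eq D_def Nk_def mon2_simps)
  then have comm: "mmul (mmul D Nk) h = mmul h (mmul D Nk)"
    using gen_grp_commute[OF _ H_gens_selfadj] assms unfolding H_def by blast
  have "mmul Nk (mmul h Nk) = mmul (mmul D D) (mmul Nk (mmul h Nk))"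
    by (simp add: involutions(1))
  also have "\<dots> = mmul D (mmul (mmul (mmul D Nk) h) Nk)"
    by (simp only: mmul_assoc)
  also have "\<dots> = mmul D (mmul (mmul h (mmul D Nk)) Nk)"
    by (simp only: comm)
  also have "\<dots> = mmul D (mmul h (mmul D (mmul Nk Nk)))"
    by (simp only: mmul_assoc)
  also have "\<dots> = mmul D (mmul h D)"
    by (simp add: involutions(2))
  finally show ?thesis by simp
qed

sublocale E: involution_extensions H D Nk
  by unfold_locales (use H_mult involutions conj_D_in_H conj_D_eq_conj_Nk coset_not_in_H in auto)

sublocale A: lambda_index m 1 m 2 2
  using m_ge_3 m_odd by unfold_locales auto

sublocale B: lambda_index "2 * m" 2 m 1 1
  using m_ge_3 m_odd by unfold_locales auto

lemma A_G_generators: "A.G = gen_grp ({mmul minus_I D, mon2 True True (2 * int m) 0} \<union> H_gens)"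
proof -
  have "A.q = m" by (simp add: A.q_def)
  moreover have "mon2 True True (2 * int m) (4 * int m) = mon2 True True (2 * int m) 0"
    "mon2 False False (2 * int m) 0 = mmul minus_I D"
    by (simp_all add: minus_I_def D_def mon2_simps)
  ultimately show ?thesis
    unfolding A.G_generators H_gens_eq by (simp add: mon_double[OF m_pos, symmetric] insert_commute)
qed

lemma B_G_generators: "B.G = gen_grp ({mI, Nk} \<union> H_gens)"
proof -
  have "B.q = 4 * m" unfolding B.q_def by simp
  then have "mon2 False False (int B.q) 0 = mI" by (simp add: mI_eq_mon[of "2 * m"] mon2_simps)
  then show ?thesis
    unfolding B.G_generators H_gens_eq by (simp add: Nk_def insert_commute)
qed

lemma A_G_eq_cosets: "A.G = H \<union> (\<lambda>h. mmul h D) ` H"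
  unfolding A_G_generators
proof (rule gen_grp_eq_coset_union)
  fix s assume s: "s \<in> {mmul minus_I D, mon2 True True (2 * int m) 0} \<union> H_gens"
  then show mem: "s \<in> H \<union> (\<lambda>h. mmul h D) ` H"
    using H_members H_gens_subset_H by auto
  from s have "madj s = s" using H_gens_selfadj by (auto simp: minus_I_def D_def mon2_simps)
  with mem show "madj s \<in> H \<union> (\<lambda>h. mmul h D) ` H" by simp
next
  let ?S = "{mmul minus_I D, mon2 True True (2 * int m) 0} \<union> H_gens"
  have "mmul (mon2 True False 0 0) (mmul (mmul minus_I D) (mon2 True False 0 0)) = D"
    by (simp add: minus_I_def D_def mon2_simps)
  moreover have "mon2 True False 0 0 \<in> gen_grp ?S" "mmul minus_I D \<in> gen_grp ?S"
    by (simp_all add: H_gens_eq gen_grp_generator)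
  ultimately show "D \<in> gen_grp ?S"
    by (metis gen_grp_mult)
qed (use H_mult mI_in_H involutions conj_D_in_H in \<open>auto intro!: H_subset_gen_grp\<close>)

lemma B_G_eq_cosets: "B.G = H \<union> (\<lambda>h. mmul h Nk) ` H"
  unfolding B_G_generators
proof (rule gen_grp_eq_coset_union)
  show "mmul Nk (mmul h Nk) \<in> H" if "h \<in> H" for h
    using that conj_D_in_H conj_D_eq_conj_Nk by metis
  fix s assume s: "s \<in> {mI, Nk} \<union> H_gens"
  moreover have "Nk \<in> (\<lambda>h. mmul h Nk) ` H" using mI_in_H by force
  ultimately show mem: "s \<in> H \<union> (\<lambda>h. mmul h Nk) ` H"
    using H_gens_subset_H mI_in_H by auto
  from s have "madj s = s" using H_gens_selfadj by (auto simp: Nk_def mon2_simps mI_eq_mon[of "2 * m"])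
  with mem show "madj s \<in> H \<union> (\<lambda>h. mmul h Nk) ` H" by simp
qed (use H_mult mI_in_H involutions in \<open>auto intro!: H_subset_gen_grp gen_grp_generator\<close>)

definition anti_refls :: "m2 set" where
  "anti_refls = (\<lambda>s. mon2 True False (2 * int s) (- (2 * int s))) ` {..<2 * m}"

definition H_refls :: "m2 set" where
  "H_refls = anti_refls \<union> {mon2 True True 0 (2 * int m), mon2 True True (2 * int m) 0}"

lemma H_refls_subset_H: "H_refls \<subseteq> H"
  using H_members(1,2) H_gens_subset_H by (auto simp: H_refls_def anti_refls_def H_gens_eq)

lemma reflections_A_G:
  "reflections A.G = {mmul minus_I D, D} \<union> H_refls"
proof -
  have "A.q = m" "A.P = 2 * m" "A.Q = 2" unfolding A.q_def A.P_def A.Q_def using m_pos by simp_all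
  have "{1..<2::nat} = {1}" "{..<2::nat} = {0, 1}" by auto
  have "A.refl_diag_left = {mmul minus_I D}" "A.refl_diag_right = {D}"
    unfolding A.refl_diag_left_def A.refl_diag_right_def \<open>A.q = m\<close> \<open>{1..<2} = {1}\<close>
    by (simp_all add: mon_double[OF m_pos, symmetric] minus_I_def D_def mon2_simps)
  moreover have "A.refl_anti = anti_refls"
    unfolding A.refl_anti_def anti_refls_def \<open>A.P = 2 * m\<close>
    using mon_double[OF m_pos, of True False "int s" "- int s" for s] by simp
  moreover have "A.refl_anti_j = {mon2 True True 0 (2 * int m), mon2 True True (2 * int m) 0}"
  proof -
    have "mon2 True True (2 * int m) (4 * int m) = mon2 True True (2 * int m) 0"
      by (simp add: mon2_simps)
    then show ?thesis
      unfolding A.refl_anti_j_def \<open>A.Q = 2\<close> \<open>{..<2} = {0, 1}\<close>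
      by (simp add: mon_double[OF m_pos, symmetric])
  qed
  ultimately show ?thesis
    unfolding A.reflections_G H_refls_def by auto
qed

lemma reflections_B_G:
  "reflections B.G = {mmul minus_I Nk, Nk} \<union> H_refls"
proof -
  have "B.P = 2 * m" "B.Q = 4" unfolding B.P_def B.Q_def using m_pos by simp_all
  have "{..<4::nat} = {0, 1, 2, 3}" by auto
  have "B.refl_diag_left = {}" "B.refl_diag_right = {}"
    unfolding B.refl_diag_left_def B.refl_diag_right_def by simp_all
  moreover have "B.refl_anti = anti_refls"
    unfolding B.refl_anti_def anti_refls_def \<open>B.P = 2 * m\<close> by simp
  moreover have "B.refl_anti_j = {mmul minus_I Nk, Nk, mon2 True True 0 (2 * int m), mon2 True True (2 * int m) 0}"
  proof -
    have "mon2 True True (3 * int m) (5 * int m) = mmul minus_I Nk"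
      "mon2 True True (2 * int m) (4 * int m) = mon2 True True (2 * int m) 0"
      by (simp_all add: minus_I_def Nk_def mon2_simps)
    then show ?thesis
      unfolding B.refl_anti_j_def \<open>B.Q = 4\<close> \<open>{..<4} = {0, 1, 2, 3}\<close>
      by (auto simp: Nk_def algebra_simps)
  qed
  ultimately show ?thesis
    unfolding B.reflections_G H_refls_def by auto
qed

lemma coset_swap_refl_iso: "refl_iso (coset_swap H D Nk) A.G B.G"
  unfolding refl_iso_def
proof (intro conjI ballI)
  show "bij_betw (coset_swap H D Nk) A.G B.G"
    unfolding A_G_eq_cosets B_G_eq_cosets by (rule E.coset_swap_bij)
  show "coset_swap H D Nk (mmul x y) = mmul (coset_swap H D Nk x) (coset_swap H D Nk y)"
    if "x \<in> A.G" "y \<in> A.G" for x y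
    using that unfolding A_G_eq_cosets by (rule E.coset_swap_mult)
  have "coset_swap H D Nk D = Nk" "coset_swap H D Nk (mmul minus_I D) = mmul minus_I Nk"
    using E.coset_swap_coset[OF mI_in_H] E.coset_swap_coset[OF H_members(3)] by simp_all
  moreover have "coset_swap H D Nk ` H_refls = id ` H_refls"
    using H_refls_subset_H E.coset_swap_in by (intro image_cong) auto
  ultimately have "coset_swap H D Nk ` reflections A.G = reflections B.G"
    unfolding reflections_A_G reflections_B_G by (simp add: image_Un)
  then show "coset_swap H D Nk ` {g \<in> A.G. is_reflection g} = {h \<in> B.G. is_reflection h}"
    by (simp add: reflections_def)
qed

lemma D_matrix: "M2 1 0 0 (- 1) = D"
  and Nk_matrix: "M2 0 quat_k (- quat_k) 0 = Nk"
proof -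
  have "dic (2 * m) e (k + int (2 * m)) = - dic (2 * m) e k" for e k
    using m_pos by (intro dic_add_n) simp
  from this[of False 0] this[of True "int m"]
  have "dic (2 * m) False (2 * int m) = - 1" "dic (2 * m) True (3 * int m) = - quat_k"
    by (simp_all add: dic_zero_exp dic_quat_k[OF m_pos] add.commute)
  then show "M2 1 0 0 (- 1) = D" "M2 0 quat_k (- quat_k) 0 = Nk"
    by (simp_all add: D_def Nk_def mon_def dic_zero_exp dic_quat_k[OF m_pos])
qed

lemma exceptional_refl_iso:
  "\<exists>f. refl_iso f (Ggrp m 1 m 2) (Ggrp (2 * m) 2 m 1)
     \<and> f (M2 1 0 0 (-1)) = M2 0 quat_k (- quat_k) 0
     \<and> f (Nmat 1) = Nmat 1 \<and> f (Nmat (omega m)) = Nmat (omega m) \<and> f (Nmat quat_j) = Nmat quat_j"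
proof (intro exI conjI)
  show "refl_iso (coset_swap H D Nk) (Ggrp m 1 m 2) (Ggrp (2 * m) 2 m 1)"
    using coset_swap_refl_iso unfolding A.G_def B.G_def .
  show "coset_swap H D Nk (M2 1 0 0 (-1)) = M2 0 quat_k (- quat_k) 0"
    using E.coset_swap_coset[OF mI_in_H] by (simp add: D_matrix Nk_matrix)
  have "Nmat c \<in> H" if "c \<in> {1, omega m, quat_j}" for c
    using that H_gens_subset_H by (auto simp: H_gens_def)
  then show "coset_swap H D Nk (Nmat 1) = Nmat 1" "coset_swap H D Nk (Nmat (omega m)) = Nmat (omega m)"
    "coset_swap H D Nk (Nmat quat_j) = Nmat quat_j"
    by (simp_all add: E.coset_swap_in)
qed

end

theorem theorem5p7:
  shows "(\<forall>n n' a b r a' b' r'. 2 \<le> n \<longrightarrow> 2 \<le> n' \<longrightarrow>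
            (n, a, b, r) \<in> Lambda_set n \<longrightarrow> (n', a', b', r') \<in> Lambda_set n' \<longrightarrow>
            (n, a, b, r) \<noteq> (n', a', b', r') \<longrightarrow>
            refl_isomorphic (Ggrp n a b r) (Ggrp n' a' b' r') \<longrightarrow>
            (\<exists>m. odd m \<and> {(n, a, b, r), (n', a', b', r')} = {(m, 1, m, 2), (2 * m, 2, m, 1)}))
       \<and> (\<forall>m::nat. odd m \<and> 3 \<le> m \<longrightarrow>
            (\<exists>f. refl_iso f (Ggrp m 1 m 2) (Ggrp (2 * m) 2 m 1)
                 \<and> f (M2 1 0 0 (-1)) = M2 0 quat_k (- quat_k) 0
                 \<and> f (Nmat 1) = Nmat 1
                 \<and> f (Nmat (omega m)) = Nmat (omega m)
                 \<and> f (Nmat quat_j) = Nmat quat_j))"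
proof (intro conjI allI impI)
  fix n n' a b r a' b' r' :: nat
  assume "2 \<le> n" "2 \<le> n'" "(n, a, b, r) \<in> Lambda_set n" "(n', a', b', r') \<in> Lambda_set n'"
    "(n, a, b, r) \<noteq> (n', a', b', r')" "refl_isomorphic (Ggrp n a b r) (Ggrp n' a' b' r')"
  then show "\<exists>m. odd m \<and> {(n, a, b, r), (n', a', b', r')} = {(m, 1, m, 2), (2 * m, 2, m, 1)}"
    by (rule refl_isomorphic_Ggrp_imp_exceptional)
next
  fix m :: nat
  assume "odd m \<and> 3 \<le> m"
  then interpret exceptional_indices m by unfold_locales auto
  show "\<exists>f. refl_iso f (Ggrp m 1 m 2) (Ggrp (2 * m) 2 m 1)
          \<and> f (M2 1 0 0 (-1)) = M2 0 quat_k (- quat_k) 0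
          \<and> f (Nmat 1) = Nmat 1 \<and> f (Nmat (omega m)) = Nmat (omega m)
          \<and> f (Nmat quat_j) = Nmat quat_j"
    by (rule exceptional_refl_iso)
qed

end
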